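(* Let $M$ be the cokernel of the matrix $S_{p_\phi,q_\phi}(t,1)$, viewed as a $\mathbb C[t]$-module, and let $\mathfrak F_\ell(M)$ denote its Fitting ideals. Then $\mathfrak F_0(M)=0$, $\mathfrak F_1(M)=(\Delta(t,1))$ (so $M$ has rank $1$), and $\mathfrak F_\ell(M)=\mathbb C[t]$ for all $\ell>n-\mu$.
   Context: Let $a,b,c\in\mathbb C[s,v]$ be homogeneous of the same degree $n\ge3$, $\gcd(a,b,c)=1$, with $\phi=(a:b:c):\mathbb P^1\to\mathbb P^2$ birational onto its image $\mathcal C$. Let $p,q$ be a $\mu$-basis: a homogeneous basis (degrees $\mu\le n-\mu$) of the free syzygy module of $(a,b,c)$. Put $p_\phi(s,v;t,u)=p_1(s,v)a(t,u)+p_2(s,v)b(t,u)+p_3(s,v)c(t,u)$, similarly $q_\phi$, and let $S_{p_\phi,q_\phi}(t,u)$ be the $n\times n$ Sylvester matrix of $p_\phi,q_\phi$ with respect to $(s,v)$ (matrix of $(\alpha,\beta)\mapsto\alpha p_\phi+\beta q_\phi$ from $\mathbb C[t,u]\otimes\mathbb C[s,v]_{n-\mu-1}\oplus\mathbb C[t,u]\otimes\mathbb C[s,v]_{\mu-1}$ to $\mathbb C[t,u]\otimes\mathbb C[s,v]_{n-1}$). Let $\Delta(t,u)=\mathrm{SRes}(p,q)(a(t,u),b(t,u),c(t,u))$, where $\mathrm{SRes}(p,q)\in\mathbb C[x_1,x_2,x_3]$ is the first principal subresultant coefficient with respect to $(s,v)$ of $\sum_ix_ip_i$ and $\sum_ix_iq_i$.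 The Fitting ideal $\mathfrak F_\ell(M)$ is the ideal generated by the $(n-\ell)$-minors of a presentation matrix with $n$ rows. *)

theory Defs
  imports "HOL-Computational_Algebra.Polynomial_Factorial" "HOL-Computational_Algebra.Field_as_Ring"
          "Jordan_Normal_Form.Determinant"
          "Jordan_Normal_Form.DL_Submatrix"
begin

text \<open>Bivariate forms in \<open>\<complex>[s,v]\<close> are represented as elements of \<open>(\<complex>[v])[s]\<close>,
  i.e. of type \<open>complex poly poly\<close>: the outer variable is \<open>s\<close>, the inner one is \<open>v\<close>.
  The coefficient of \<open>s^i v^j\<close> in \<open>f\<close> is \<open>coeff (coeff f i) j\<close>.\<close>

type_synonym form = "complex poly poly"

definition homogeneous :: "nat \<Rightarrow> form \<Rightarrow> bool" where
  "homogeneous d f \<longleftrightarrow> (\<forall>i j. coeff (coeff f i) j \<noteq> 0 \<longrightarrow> i + j = d)"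

definition feval :: "form \<Rightarrow> complex \<Rightarrow> complex \<Rightarrow> complex" where
  "feval f s0 v0 = poly (map_poly (\<lambda>c. poly c v0) f) s0"

definition dehom :: "form \<Rightarrow> complex poly" where
  "dehom f = map_poly (\<lambda>c. poly c 1) f"

definition proj_eq3 :: "complex \<times> complex \<times> complex \<Rightarrow> complex \<times> complex \<times> complex \<Rightarrow> bool" where
  "proj_eq3 x y \<longleftrightarrow> (case x of (x1,x2,x3) \<Rightarrow> case y of (y1,y2,y3) \<Rightarrow>
      x1*y2 = x2*y1 \<and> x1*y3 = x3*y1 \<and> x2*y3 = x3*y2)"

definition proj_eq1 :: "complex \<times> complex \<Rightarrow> complex \<times> complex \<Rightarrow> bool" where
  "proj_eq1 x y \<longleftrightarrow> fst x * snd y = snd x * fst y"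

definition param :: "form \<Rightarrow> form \<Rightarrow> form \<Rightarrow> complex \<times> complex \<Rightarrow> complex \<times> complex \<times> complex" where
  "param a b c P = (feval a (fst P) (snd P), feval b (fst P) (snd P), feval c (fst P) (snd P))"

text \<open>\<open>\<phi> = (a:b:c) : \<P>^1 \<rightarrow> \<P>^2\<close> is birational onto its image, i.e. it is a proper
  (generically injective) parametrisation: apart from finitely many points of \<open>\<P>^1\<close>,
  no other point of \<open>\<P>^1\<close> has the same image.  (Points of \<open>\<P>^1\<close> are nonzero pairs up
  to scaling; the exceptional set is required to be finite modulo scaling, expressed by
  requiring finitely many exceptional values of \<open>s/v\<close> and \<open>v/s\<close> in the two charts.)\<close>
definition birational_onto_image :: "form \<Rightarrow> form \<Rightarrow> form \<Rightarrow> bool" where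
  "birational_onto_image a b c \<longleftrightarrow>
     (let bad = {P. P \<noteq> (0,0) \<and> (\<exists>Q. Q \<noteq> (0,0) \<and> \<not> proj_eq1 P Q \<and>
                                       proj_eq3 (param a b c P) (param a b c Q))}
      in finite {t. (t,1) \<in> bad} \<and> finite {t. (1,t) \<in> bad})"

definition is_syzygy :: "form \<Rightarrow> form \<Rightarrow> form \<Rightarrow> form \<times> form \<times> form \<Rightarrow> bool" where
  "is_syzygy a b c h \<longleftrightarrow> (case h of (h1,h2,h3) \<Rightarrow> h1*a + h2*b + h3*c = 0)"

definition mu_basis :: "nat \<Rightarrow> nat \<Rightarrow> form \<Rightarrow> form \<Rightarrow> form \<Rightarrow>
     form \<times> form \<times> form \<Rightarrow> form \<times> form \<times> form \<Rightarrow> bool" where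
  "mu_basis n \<mu> a b c p q \<longleftrightarrow>
     \<mu> \<le> n - \<mu> \<and>
     (case p of (p1,p2,p3) \<Rightarrow> homogeneous \<mu> p1 \<and> homogeneous \<mu> p2 \<and> homogeneous \<mu> p3) \<and>
     (case q of (q1,q2,q3) \<Rightarrow> homogeneous (n-\<mu>) q1 \<and> homogeneous (n-\<mu>) q2 \<and> homogeneous (n-\<mu>) q3) \<and>
     is_syzygy a b c p \<and> is_syzygy a b c q \<and>
     (\<forall>h. is_syzygy a b c h \<longrightarrow>
        (\<exists>!(\<alpha>,\<beta>). h = (case p of (p1,p2,p3) \<Rightarrow> case q of (q1,q2,q3) \<Rightarrow>
                       (\<alpha>*p1+\<beta>*q1, \<alpha>*p2+\<beta>*q2, \<alpha>*p3+\<beta>*q3))))"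

text \<open>Coefficient of \<open>s^i v^(d-i)\<close> in \<open>h_\<phi>(s,v;t,1) = h1(s,v) a(t,1) + h2(s,v) b(t,1) + h3(s,v) c(t,1)\<close>,
  for \<open>h\<close> homogeneous of degree \<open>d\<close>; an element of \<open>\<complex>[t]\<close>.\<close>
definition phi_coeff :: "nat \<Rightarrow> form \<Rightarrow> form \<Rightarrow> form \<Rightarrow> form \<times> form \<times> form \<Rightarrow> nat \<Rightarrow> complex poly" where
  "phi_coeff d a b c h i = (if i \<le> d then (case h of (h1,h2,h3) \<Rightarrow>
       [:coeff (coeff h1 i) (d-i):] * dehom a + [:coeff (coeff h2 i) (d-i):] * dehom b
     + [:coeff (coeff h3 i) (d-i):] * dehom c) else 0)"

text \<open>Generic "Sylvester-type" matrix over \<open>\<complex>[t]\<close> of \<open>(\<alpha>,\<beta>) \<mapsto> \<alpha> f + \<beta> g\<close> for forms \<open>f\<close>, \<open>g\<close>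
  in \<open>(s,v)\<close> of degrees \<open>d\<close>, \<open>e\<close> (given by their coefficient functions \<open>F i\<close>, \<open>G i\<close> of
  \<open>s^i v^(d-i)\<close>, \<open>s^i v^(e-i)\<close>), with \<open>\<alpha>\<close> of degree \<open>ka - 1\<close> (\<open>ka\<close> columns, basis
  \<open>s^j v^(ka-1-j)\<close>), \<open>\<beta>\<close> of degree \<open>kb - 1\<close> (\<open>kb\<close> columns).  Rows are indexed by
  the monomials \<open>s^(r+r0) v^(\<dots>)\<close>, \<open>r < nr\<close>.\<close>
definition syl_map_mat :: "nat \<Rightarrow> nat \<Rightarrow> nat \<Rightarrow> nat \<Rightarrow> nat \<Rightarrow> nat \<Rightarrow>
     (nat \<Rightarrow> complex poly) \<Rightarrow> (nat \<Rightarrow> complex poly) \<Rightarrow> complex poly mat" where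
  "syl_map_mat nr r0 d e ka kb F G = mat nr (ka + kb) (\<lambda>(r,j).
      let k = r + r0 in
      if j < ka then (if j \<le> k \<and> k - j \<le> d then F (k - j) else 0)
      else (let j' = j - ka in if j' \<le> k \<and> k - j' \<le> e then G (k - j') else 0))"

text \<open>The \<open>n \<times> n\<close> Sylvester matrix \<open>S_{p_\<phi>,q_\<phi>}(t,1)\<close>: \<open>\<alpha> \<in> \<complex>[s,v]_{n-\<mu>-1}\<close>,
  \<open>\<beta> \<in> \<complex>[s,v]_{\<mu>-1}\<close>, target \<open>\<complex>[s,v]_{n-1}\<close> (rows \<open>s^k v^(n-1-k)\<close>, \<open>k < n\<close>).\<close>
definition sylvester_phi :: "nat \<Rightarrow> nat \<Rightarrow> form \<Rightarrow> form \<Rightarrow> form \<Rightarrow>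
     form \<times> form \<times> form \<Rightarrow> form \<times> form \<times> form \<Rightarrow> complex poly mat" where
  "sylvester_phi n \<mu> a b c p q =
     syl_map_mat n 0 \<mu> (n-\<mu>) (n-\<mu>) \<mu> (phi_coeff \<mu> a b c p) (phi_coeff (n-\<mu>) a b c q)"

text \<open>\<open>\<Delta>(t,1) = SRes(p,q)(a(t,1),b(t,1),c(t,1))\<close>.  The first principal subresultant
  coefficient of forms \<open>f\<close>, \<open>g\<close> of degrees \<open>d\<close>, \<open>e\<close> (\<open>d + e = n\<close>) w.r.t. \<open>(s,v)\<close> is the
  determinant of the matrix of \<open>(\<alpha>,\<beta>) \<mapsto> \<alpha> f + \<beta> g\<close>, \<open>\<alpha>\<close> of degree \<open>e-2\<close>, \<open>\<beta>\<close> of degree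
  \<open>d-2\<close>, into forms of degree \<open>n-2\<close>, keeping the rows of the monomials \<open>s^k v^(n-2-k)\<close>,
  \<open>1 \<le> k \<le> n-2\<close> (i.e. deleting the row of \<open>v^(n-2)\<close>).  Since evaluation
  \<open>x \<mapsto> (a(t,1),b(t,1),c(t,1))\<close> is a ring homomorphism commuting with the determinant,
  \<open>\<Delta>(t,1)\<close> is obtained by forming this determinant directly for \<open>f = p_\<phi>(\<cdot>;t,1)\<close>,
  \<open>g = q_\<phi>(\<cdot>;t,1)\<close>.\<close>
definition Delta1 :: "nat \<Rightarrow> nat \<Rightarrow> form \<Rightarrow> form \<Rightarrow> form \<Rightarrow>
     form \<times> form \<times> form \<Rightarrow> form \<times> form \<times> form \<Rightarrow> complex poly" where
  "Delta1 n \<mu> a b c p q =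
     det (syl_map_mat (n-2) 1 \<mu> (n-\<mu>) (n-\<mu>-1) (\<mu>-1) (phi_coeff \<mu> a b c p) (phi_coeff (n-\<mu>) a b c q))"

definition ideal_gen :: "'a::comm_ring_1 set \<Rightarrow> 'a set" where
  "ideal_gen S = {(\<Sum>x\<in>T. r x * x) | T r. finite T \<and> T \<subseteq> S}"

definition minors :: "'a::comm_ring_1 mat \<Rightarrow> nat \<Rightarrow> 'a set" where
  "minors A k = {det (submatrix A I J) | I J. I \<subseteq> {..<dim_row A} \<and> J \<subseteq> {..<dim_col A}
                   \<and> card I = k \<and> card J = k}"

text \<open>Fitting ideal \<open>\<FF>_\<ell>\<close> of the cokernel of a presentation matrix \<open>A\<close> with \<open>n\<close> rows:
  generated by the \<open>(n-\<ell>)\<close>-minors (for \<open>\<ell> \<ge> n\<close> this is the unit ideal, the empty minor being 1).\<close>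
definition fitting_ideal :: "'a::comm_ring_1 mat \<Rightarrow> nat \<Rightarrow> 'a set" where
  "fitting_ideal A l = ideal_gen (minors A (dim_row A - l))"

end

theory Submission
  imports Defs "HOL-Computational_Algebra.Fundamental_Theorem_Algebra"
begin

(* Write S for the Sylvester matrix of p_phi(s,v;t,1), q_phi(s,v;t,1) over C[t].
   Because p and q are syzygies of (a,b,c), both forms vanish at (s,v) = (t,1), so
   p_phi = (s - t v) p' and q_phi = (s - t v) q' with forms p', q' of degrees mu-1, n-mu-1.
   Correspondingly S = L * S', where L (n x (n-1)) is the matrix of multiplication by s - t v,
   whose lower maximal minor is 1, and S' ((n-1) x n) is the Sylvester map of p', q'.
   Hence the maximal minors of S and S' generate the same ideal F_1.  The Koszul vector
   (q', -p') lies in the kernel of S', and Cramer's rule shows that the c-th maximal minor of S'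
   is, up to sign, det R times the c-th coordinate of that vector, where R is the square
   Sylvester matrix of p', q'; det R is also Delta(t,1).  Since gcd(a,b,c) = 1 and p, q form a
   mu-basis, the coefficients of p', q' have no common root, so they generate the unit ideal and
   F_1 = (Delta(t,1)).  The same kernel vector gives det S = 0, i.e. F_0 = 0.  Finally, for
   k < mu, suitable k x k band submatrices of S become triangular modulo t - t0, with the first
   coefficient not vanishing at t0 on the diagonal; so the k-minors have no common root and
   F_(n-k) is the unit ideal. *)


subsection \<open>Ideals generated by a set\<close>

lemma ideal_gen_base: "x \<in> S \<Longrightarrow> x \<in> ideal_gen S"
  unfolding ideal_gen_def by (rule CollectI, rule exI[of _ "{x}"], rule exI[of _ "\<lambda>_. 1"], auto)

lemma ideal_gen_zero: "0 \<in> ideal_gen S"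
  unfolding ideal_gen_def by (rule CollectI, rule exI[of _ "{}"], auto)

lemma ideal_gen_mult: "x \<in> ideal_gen S \<Longrightarrow> c * x \<in> ideal_gen S"
  unfolding ideal_gen_def
proof (elim CollectE exE conjE)
  fix T r assume "x = (\<Sum>y\<in>T. r y * y)" "finite T" "T \<subseteq> S"
  then show "c * x \<in> {\<Sum>x\<in>T. r x * x |T r. finite T \<and> T \<subseteq> S}"
    by (intro CollectI exI[of _ T] exI[of _ "\<lambda>y. c * r y"]) (auto simp: sum_distrib_left mult.assoc)
qed

lemma ideal_gen_add: "x \<in> ideal_gen S \<Longrightarrow> y \<in> ideal_gen S \<Longrightarrow> x + y \<in> ideal_gen S"
  unfolding ideal_gen_def
proof (elim CollectE exE conjE)
  fix T r T' r' assume x: "x = (\<Sum>y\<in>T. r y * y)" "finite T" "T \<subseteq> S"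
    and y: "y = (\<Sum>y\<in>T'. r' y * y)" "finite T'" "T' \<subseteq> S"
  let ?r = "\<lambda>z. (if z \<in> T then r z else 0) + (if z \<in> T' then r' z else 0)"
  have "\<And>z. ?r z * z = (if z \<in> T then r z * z else 0) + (if z \<in> T' then r' z * z else 0)"
    by (auto simp: distrib_right)
  then have "(\<Sum>z\<in>T \<union> T'. ?r z * z) = (\<Sum>z\<in>T \<union> T'. (if z \<in> T then r z * z else 0))
      + (\<Sum>z\<in>T \<union> T'. (if z \<in> T' then r' z * z else 0))"
    by (simp add: sum.distrib)
  also have "\<dots> = x + y"
    using x y by (simp add: sum.If_cases Int_absorb1)
  finally show "x + y \<in> {\<Sum>x\<in>T. r x * x |T r. finite T \<and> T \<subseteq> S}"
    using x y by (intro CollectI exI[of _ "T \<union> T'"] exI[of _ ?r]) auto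
qed

lemma ideal_gen_sum:
  "finite T \<Longrightarrow> (\<And>x. x \<in> T \<Longrightarrow> f x \<in> ideal_gen S) \<Longrightarrow> sum f T \<in> ideal_gen S"
  by (induction T rule: finite_induct) (auto intro: ideal_gen_zero ideal_gen_add)

lemma ideal_gen_least: assumes "S \<subseteq> ideal_gen U" shows "ideal_gen S \<subseteq> ideal_gen U"
proof
  fix x assume "x \<in> ideal_gen S"
  then obtain T r where x: "x = (\<Sum>y\<in>T. r y * y)" "finite T" "T \<subseteq> S"
    unfolding ideal_gen_def by auto
  show "x \<in> ideal_gen U"
    unfolding x(1) by (rule ideal_gen_sum) (use x assms in \<open>auto intro: ideal_gen_mult\<close>)
qed

lemma ideal_gen_singleton: "ideal_gen {a} = {c * a | c. True}"
proof
  show "ideal_gen {a} \<subseteq> {c * a |c. True}"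
  proof
    fix x assume "x \<in> ideal_gen {a}"
    then obtain T r where x: "x = (\<Sum>y\<in>T. r y * y)" "T \<subseteq> {a}" unfolding ideal_gen_def by auto
    then consider "T = {}" | "T = {a}" by auto
    then show "x \<in> {c * a |c. True}"
      by cases (use x in \<open>auto intro: exI[of _ 0]\<close>)
  qed
  show "{c * a |c. True} \<subseteq> ideal_gen {a}"
    using ideal_gen_mult[OF ideal_gen_base[of a "{a}"]] by auto
qed

lemma ideal_gen_zero_singleton: "ideal_gen {0::'a::comm_ring_1} = {0}"
  by (simp add: ideal_gen_singleton)

lemma ideal_gen_eq_UNIV: "1 \<in> ideal_gen S \<Longrightarrow> ideal_gen S = UNIV"
  using ideal_gen_mult[of 1 S] by auto

lemma ideal_gen_proportional:
  fixes m k s :: "nat \<Rightarrow> 'a::comm_ring_1"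
  assumes rel: "\<And>c. c \<in> C \<Longrightarrow> s c * m c = R * k c" and sq: "\<And>c. c \<in> C \<Longrightarrow> s c * s c = 1"
    and one: "1 \<in> ideal_gen (k ` C)"
  shows "ideal_gen (m ` C) = ideal_gen {R}"
proof
  show "ideal_gen (m ` C) \<subseteq> ideal_gen {R}"
  proof (rule ideal_gen_least, rule)
    fix x assume "x \<in> m ` C"
    then obtain c where c: "c \<in> C" "x = m c" by auto
    have "x = (s c * s c) * m c" using sq c by simp
    also have "\<dots> = (s c * k c) * R" using rel[OF c(1)] by (metis mult.assoc mult.commute)
    finally show "x \<in> ideal_gen {R}" using ideal_gen_mult[OF ideal_gen_base[of R "{R}"]] by auto
  qed
  show "ideal_gen {R} \<subseteq> ideal_gen (m ` C)"
  proof (rule ideal_gen_least, rule)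
    fix x assume "x \<in> {R}"
    then have x: "x = R" by simp
    from one obtain T r where T: "1 = (\<Sum>y\<in>T. r y * y)" "finite T" "T \<subseteq> k ` C"
      unfolding ideal_gen_def by auto
    have "R = (\<Sum>y\<in>T. r y * (R * y))"
      using arg_cong[OF T(1), of "(*) R"] by (simp add: sum_distrib_left ac_simps)
    also have "\<dots> \<in> ideal_gen (m ` C)"
    proof (rule ideal_gen_sum[OF T(2)])
      fix y assume "y \<in> T"
      then obtain c where c: "c \<in> C" "y = k c" using T by auto
      have "m c \<in> ideal_gen (m ` C)" by (rule ideal_gen_base) (use c in auto)
      from ideal_gen_mult[OF this, of "r y * s c"] rel[OF c(1)] c
      show "r y * (R * y) \<in> ideal_gen (m ` C)" by (simp add: mult.assoc)
    qed
    finally show "x \<in> ideal_gen (m ` C)" using x by simp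
  qed
qed

text \<open>Finitely many polynomials over \<open>\<complex>\<close> without a common root generate the unit ideal:
  their gcd lies in the ideal (B\'ezout) and, having no root, is a unit.\<close>
lemma one_in_ideal_gen_if_no_common_root:
  fixes X :: "complex poly set"
  assumes fin: "finite X" and no_root: "\<And>t0. \<exists>x\<in>X. poly x t0 \<noteq> 0"
  shows "1 \<in> ideal_gen X"
proof -
  have "\<exists>g \<in> ideal_gen X. \<forall>x\<in>X. g dvd x" using fin
  proof (induction X rule: finite_induct)
    case empty
    then show ?case using ideal_gen_zero by blast
  next
    case (insert x X)
    then obtain g where g: "g \<in> ideal_gen X" "\<forall>y\<in>X. g dvd y" by blast
    have sub: "ideal_gen X \<subseteq> ideal_gen (insert x X)"
      by (rule ideal_gen_least) (auto intro: ideal_gen_base)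
    have "gcd x g = fst (bezout_coefficients x g) * x + snd (bezout_coefficients x g) * g"
      by (rule bezout_coefficients_fst_snd[symmetric])
    also have "\<dots> \<in> ideal_gen (insert x X)"
      by (rule ideal_gen_add; rule ideal_gen_mult) (use sub g in \<open>auto intro: ideal_gen_base\<close>)
    finally have "gcd x g \<in> ideal_gen (insert x X)" .
    moreover have "\<forall>y\<in>insert x X. gcd x g dvd y" using g by (auto intro: dvd_trans)
    ultimately show ?case by blast
  qed
  then obtain g where g: "g \<in> ideal_gen X" "\<forall>x\<in>X. g dvd x" by blast
  have g_no_root: "poly g z \<noteq> 0" for z
  proof
    assume "poly g z = 0"
    moreover obtain x where "x \<in> X" "poly x z \<noteq> 0" using no_root by blast
    ultimately show False using g by (auto elim!: dvdE)
  qed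
  have "degree g = 0"
  proof (rule ccontr)
    assume "degree g \<noteq> 0"
    then have "\<not> constant (poly g)" using constant_degree[of g] by simp
    then show False using fundamental_theorem_of_algebra g_no_root by blast
  qed
  moreover have "g \<noteq> 0" using g_no_root by auto
  ultimately have "is_unit g" using is_unit_iff_degree by blast
  then obtain h where "1 = h * g" by (auto elim!: dvdE simp: ac_simps)
  with ideal_gen_mult[OF g(1), of h] show ?thesis by simp
qed


subsection \<open>Minors of matrices\<close>

lemma pick_lessThan: "i < N \<Longrightarrow> pick {..<N} i = i"
proof -
  assume "i < N"
  moreover have "{a \<in> {..<N}. a < i} = {..<i}" using \<open>i < N\<close> by auto
  ultimately show ?thesis using pick_card_in_set[of i "{..<N}"] by simp
qed

lemma pick_interval: "i < k \<Longrightarrow> pick {x..<x+k} i = x + i"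
proof -
  assume "i < k"
  moreover have "{a \<in> {x..<x+k}. a < x + i} = {x..<x+i}" using \<open>i < k\<close> by auto
  ultimately show ?thesis using pick_card_in_set[of "x+i" "{x..<x+k}"] by simp
qed

lemma pick_delete: "c < M \<Longrightarrow> j < M - 1 \<Longrightarrow> pick ({..<M} - {c}) j = insert_index c j"
proof -
  assume c: "c < M" and j: "j < M - 1"
  have "{a \<in> {..<M} - {c}. a < insert_index c j} = {..<insert_index c j} - {c}"
    using c j by (auto simp: insert_index_def)
  moreover have "card ({..<insert_index c j} - {c}) = j"
    by (auto simp: insert_index_def card_Diff_singleton_if)
  moreover have "insert_index c j \<in> {..<M} - {c}" using c j by (auto simp: insert_index_def)
  ultimately show ?thesis using pick_card_in_set[of "insert_index c j" "{..<M} - {c}"] by simp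
qed

lemma submatrix_UNIV_rows: "submatrix A UNIV J = submatrix A {..<dim_row A} J"
  by (rule eq_matI, auto simp: submatrix_def pick_UNIV pick_lessThan)

lemma submatrix_UNIV_cols: "submatrix A I UNIV = submatrix A I {..<dim_col A}"
  by (rule eq_matI, auto simp: submatrix_def pick_UNIV pick_lessThan)

lemma submatrix_full: "submatrix A {..<dim_row A} {..<dim_col A} = A"
  by (rule eq_matI) (auto simp: submatrix_def pick_lessThan)

lemma submatrix_intervals:
  assumes A: "A \<in> carrier_mat m l" and x: "x + k \<le> m" and y: "y + k \<le> l"
  shows "submatrix A {x..<x+k} {y..<y+k} = mat k k (\<lambda>(r,j). A $$ (x+r, y+j))"
proof -
  have "{i. i < m \<and> x \<le> i \<and> i < x+k} = {x..<x+k}" "{i. i < l \<and> y \<le> i \<and> i < y+k} = {y..<y+k}"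
    using x y by auto
  then show ?thesis
    by (intro eq_matI) (use A in \<open>auto simp: submatrix_def pick_interval\<close>)
qed

lemma submatrix_mult:
  assumes A: "A \<in> carrier_mat m l" and B: "B \<in> carrier_mat l k"
    and I: "I \<subseteq> {..<m}" and J: "J \<subseteq> {..<k}"
  shows "submatrix (A * B) I J = submatrix A I UNIV * submatrix B UNIV J"
proof -
  have cI: "{i. i < m \<and> i \<in> I} = I" using I by auto
  have cJ: "{i. i < k \<and> i \<in> J} = J" using J by auto
  have cU: "{i. i < l \<and> i \<in> (UNIV::nat set)} = {..<l}" by auto
  show ?thesis
  proof (rule eq_matI)
    fix i j assume "i < dim_row (submatrix A I UNIV * submatrix B UNIV J)"
      and "j < dim_col (submatrix A I UNIV * submatrix B UNIV J)"
    then have i: "i < card I" and j: "j < card J" using A B by (auto simp: dim_submatrix cI cJ)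
    have "pick I i < m" "pick J j < k" using pick_in_set_le[OF i] pick_in_set_le[OF j] I J by auto
    then show "submatrix (A * B) I J $$ (i, j) = (submatrix A I UNIV * submatrix B UNIV J) $$ (i, j)"
      using A B i j
      by (auto simp: submatrix_def cI cJ cU scalar_prod_def pick_UNIV intro!: sum.cong)
  qed (use A B in \<open>auto simp: dim_submatrix cI cJ\<close>)
qed

lemma carrier_submatrix:
  assumes "I \<subseteq> {..<dim_row A}" "J \<subseteq> {..<dim_col A}"
  shows "submatrix A I J \<in> carrier_mat (card I) (card J)"
proof -
  have I: "{i. i < dim_row A \<and> i \<in> I} = I" and J: "{j. j < dim_col A \<and> j \<in> J} = J"
    using assms by auto
  have "dim_row (submatrix A I J) = card I" "dim_col (submatrix A I J) = card J"
    by (simp_all only: dim_submatrix I J)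
  then show ?thesis by (simp only: carrier_mat_def mem_Collect_eq)
qed

lemma det_single_entry_row:
  fixes C :: "'a::comm_ring_1 mat"
  assumes C: "C \<in> carrier_mat N N" and i: "i < N" and j0: "j0 < N"
    and row: "\<And>j. j < N \<Longrightarrow> C $$ (i,j) = (if j = j0 then v else 0)"
  shows "det C = v * (-1)^(i+j0) * det (mat_delete C i j0)"
proof -
  have "det C = (\<Sum>j<N. C $$ (i,j) * cofactor C i j)" by (rule laplace_expansion_row[OF C i])
  also have "\<dots> = (\<Sum>j<N. if j = j0 then v * cofactor C i j else 0)" by (rule sum.cong) (auto simp: row)
  also have "\<dots> = v * cofactor C i j0" using j0 by simp
  finally show ?thesis by (simp add: cofactor_def)
qed

lemma det_zero_row:
  fixes C :: "'a::comm_ring_1 mat"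
  assumes C: "C \<in> carrier_mat N N" and i: "i < N" and row: "\<And>j. j < N \<Longrightarrow> C $$ (i,j) = 0"
  shows "det C = 0"
  using laplace_expansion_row[OF C i] row by simp

lemma det_lower_triangular_const_diag:
  fixes E :: "'a::comm_ring_1 mat"
  assumes E: "E \<in> carrier_mat k k" and low: "\<And>i j. i < j \<Longrightarrow> j < k \<Longrightarrow> E $$ (i,j) = 0"
    and diag: "\<And>i. i < k \<Longrightarrow> E $$ (i,i) = v"
  shows "det E = v ^ k"
proof -
  have "det E = prod_list (diag_mat E)" by (rule det_lower_triangular[OF low E])
  also have "diag_mat E = map (\<lambda>i. v) [0..<k]" using E diag by (auto simp: diag_mat_def)
  finally show ?thesis by (simp add: map_replicate_const)
qed

lemma ideal_minors_zero_matrix: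
  assumes A: "\<And>i j. i < dim_row A \<Longrightarrow> j < dim_col A \<Longrightarrow> A $$ (i,j) = 0" and k: "k > 0"
  shows "ideal_gen (minors A k) = {0}"
proof -
  have "minors A k \<subseteq> {0}"
  proof
    fix x assume "x \<in> minors A k"
    then obtain I J where x: "x = det (submatrix A I J)" and I: "I \<subseteq> {..<dim_row A}"
      and J: "J \<subseteq> {..<dim_col A}" and cI: "card I = k" and cJ: "card J = k"
      unfolding minors_def by blast
    have C: "submatrix A I J \<in> carrier_mat k k" using carrier_submatrix[OF I J] cI cJ by simp
    have "submatrix A I J $$ (0, j) = 0" if j: "j < k" for j
    proof -
      have p: "pick I 0 \<in> I" "pick J j \<in> J"
        using pick_in_set_le[of 0 I] pick_in_set_le[of j J] k j cI cJ by auto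
      have "{i. i < dim_row A \<and> i \<in> I} = I" "{i. i < dim_col A \<and> i \<in> J} = J" using I J by auto
      then have "submatrix A I J $$ (0, j) = A $$ (pick I 0, pick J j)"
        by (intro submatrix_index) (use j k cI cJ in auto)
      also have "\<dots> = 0" using p I J by (intro A) auto
      finally show ?thesis .
    qed
    then show "x \<in> {0}" using x det_zero_row[OF C k] by simp
  qed
  then have "ideal_gen (minors A k) \<subseteq> ideal_gen {0}"
    by (intro ideal_gen_least) (auto intro: ideal_gen_base)
  then show ?thesis using ideal_gen_zero ideal_gen_zero_singleton by auto
qed

lemma fitting_ideal_0_square:
  assumes A: "A \<in> carrier_mat n n"
  shows "fitting_ideal A 0 = ideal_gen {det A}"
proof -
  have "minors A n = {det A}"
  proof
    show "minors A n \<subseteq> {det A}"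
    proof
      fix x assume "x \<in> minors A n"
      then obtain I J where x: "x = det (submatrix A I J)" and I: "I \<subseteq> {..<n}" "card I = n"
        and J: "J \<subseteq> {..<n}" "card J = n" unfolding minors_def using A by auto
      have "I = {..<n}" "J = {..<n}" using I J by (simp_all add: card_subset_eq)
      then show "x \<in> {det A}" using x A submatrix_full[of A] by simp
    qed
    show "{det A} \<subseteq> minors A n"
      unfolding minors_def using A submatrix_full[of A] by (auto intro!: exI[of _ "{..<n}"])
  qed
  then show ?thesis unfolding fitting_ideal_def using A by simp
qed

text \<open>Fitting ideals beyond the number of rows are the unit ideal (empty minor).\<close>
lemma fitting_ideal_beyond_rows:
  assumes "dim_row A \<le> l"
  shows "fitting_ideal A l = UNIV"
proof -
  have "submatrix A {} {} \<in> carrier_mat 0 0" using carrier_submatrix[of "{}" A "{}"] by simp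
  then have "1 \<in> minors A 0" unfolding minors_def by (intro CollectI exI[of _ "{}"]) simp
  moreover have "dim_row A - l = 0" using assms by simp
  ultimately show ?thesis
    unfolding fitting_ideal_def by (simp add: ideal_gen_eq_UNIV ideal_gen_base)
qed

definition del_col :: "'a mat \<Rightarrow> nat \<Rightarrow> 'a mat" where
  "del_col A i = mat (dim_row A) (dim_col A - 1) (\<lambda>(r,j). A $$ (r, insert_index i j))"

definition border :: "nat \<Rightarrow> 'a::comm_ring_1 mat \<Rightarrow> 'a mat" where
  "border i A = mat (Suc (dim_row A)) (dim_col A)
     (\<lambda>(r,j). if r = 0 then (if j = i then 1 else 0) else A $$ (r-1,j))"

lemma del_col_dims[simp]: "dim_row (del_col A c) = dim_row A" "dim_col (del_col A c) = dim_col A - 1"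
  by (auto simp: del_col_def)

lemma del_col_carrier: "A \<in> carrier_mat m (Suc m) \<Longrightarrow> del_col A c \<in> carrier_mat m m"
  by (auto simp: del_col_def)

lemma del_col_index:
  "r < dim_row A \<Longrightarrow> j < dim_col A - 1 \<Longrightarrow> del_col A c $$ (r,j) = A $$ (r, insert_index c j)"
  by (auto simp: del_col_def)

lemma det_border:
  fixes A :: "'a::comm_ring_1 mat"
  assumes A: "A \<in> carrier_mat m (Suc m)" and i: "i < Suc m"
  shows "det (border i A) = (-1)^i * det (del_col A i)"
proof -
  have B: "border i A \<in> carrier_mat (Suc m) (Suc m)" using A by (auto simp: border_def)
  have "det (border i A) = 1 * (-1)^(0+i) * det (mat_delete (border i A) 0 i)"
    by (rule det_single_entry_row[OF B _ i]) (use A in \<open>auto simp: border_def\<close>)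
  also have "mat_delete (border i A) 0 i = del_col A i"
    by (rule eq_matI) (use A in \<open>auto simp: mat_delete_def border_def del_col_def insert_index_def\<close>)
  finally show ?thesis by simp
qed

text \<open>We apply Cramer's lemma
  to the matrix bordered by \<open>e\<^sub>i\<close>, which maps \<open>x\<close> to \<open>x\<^sub>i e\<^sub>0\<close>.\<close>
lemma kernel_maximal_minors:
  fixes A :: "'a::comm_ring_1 mat"
  assumes A: "A \<in> carrier_mat m (Suc m)" and x: "x \<in> carrier_vec (Suc m)"
    and ker: "A *\<^sub>v x = 0\<^sub>v m" and i: "i < Suc m" and i': "i' < Suc m"
  shows "x $ i' * ((-1)^i * det (del_col A i)) = x $ i * ((-1)^i' * det (del_col A i'))"
proof -
  let ?B = "border i A"
  have B: "?B \<in> carrier_mat (Suc m) (Suc m)" using A by (auto simp: border_def)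
  have Bx: "?B *\<^sub>v x = vec (Suc m) (\<lambda>r. if r = 0 then x $ i else 0)"
  proof (rule eq_vecI)
    fix r assume "r < dim_vec (vec (Suc m) (\<lambda>r. if r = 0 then x $ i else 0))"
    then have r: "r < Suc m" by simp
    show "(?B *\<^sub>v x) $ r = vec (Suc m) (\<lambda>r. if r = 0 then x $ i else 0) $ r"
    proof (cases "r = 0")
      case True
      have "(?B *\<^sub>v x) $ r = (\<Sum>j<Suc m. (if j = i then 1 else 0) * x $ j)"
        using True A x B by (simp add: scalar_prod_def border_def atLeast0LessThan Matrix.row_def)
      also have "\<dots> = (\<Sum>j<Suc m. if j = i then x $ j else 0)" by (rule sum.cong) auto
      finally show ?thesis using True i by simp
    next
      case False
      have "(?B *\<^sub>v x) $ r = (A *\<^sub>v x) $ (r - 1)"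
        using False r A x B by (simp add: scalar_prod_def border_def atLeast0LessThan Matrix.row_def)
      then show ?thesis using ker False r by simp
    qed
  qed (use B in auto)
  let ?C = "replace_col ?B (?B *\<^sub>v x) i'"
  have C: "?C \<in> carrier_mat (Suc m) (Suc m)" using B by (auto simp: replace_col_def)
  have "det ?C = x $ i' * ((-1)^i * det (del_col A i))"
    using cramer_lemma_mat[OF B x i'] det_border[OF A i] by simp
  moreover have "det ?C = x $ i * (-1)^(0+i') * det (mat_delete ?C 0 i')"
  proof -
    have "det ?C = (\<Sum>r<Suc m. ?C $$ (r,i') * cofactor ?C r i')"
      by (rule laplace_expansion_column[OF C i'])
    also have "\<dots> = (\<Sum>r<Suc m. if r = 0 then x $ i * cofactor ?C 0 i' else 0)"
      by (rule sum.cong) (use B i' in \<open>auto simp: replace_col_def Bx\<close>)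
    finally show ?thesis by (simp add: cofactor_def)
  qed
  moreover have "mat_delete ?C 0 i' = del_col A i'"
    by (rule eq_matI)
      (use A B in \<open>auto simp: mat_delete_def border_def del_col_def insert_index_def replace_col_def\<close>)
  ultimately show ?thesis by (simp add: mult.assoc)
qed

lemma submatrix_del_col:
  assumes A: "A \<in> carrier_mat N (Suc N)" and c: "c < Suc N"
  shows "submatrix A {..<N} ({..<Suc N} - {c}) = del_col A c"
proof -
  have "{j. j < Suc N \<and> j \<in> {..<Suc N} - {c}} = {..<Suc N} - {c}" by auto
  moreover have "card ({..<Suc N} - {c}) = N" using c by simp
  ultimately show ?thesis
    by (intro eq_matI) (use A c in \<open>auto simp: submatrix_def del_col_def pick_lessThan pick_delete\<close>)
qed

lemma maximal_minors_wide:
  assumes A: "A \<in> carrier_mat N (Suc N)"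
  shows "minors A N = (\<lambda>c. det (del_col A c)) ` {..<Suc N}"
proof
  show "minors A N \<subseteq> (\<lambda>c. det (del_col A c)) ` {..<Suc N}"
  proof
    fix x assume "x \<in> minors A N"
    then obtain I J where x: "x = det (submatrix A I J)" and I: "I \<subseteq> {..<N}" and J: "J \<subseteq> {..<Suc N}"
      and cI: "card I = N" and cJ: "card J = N" using A unfolding minors_def by auto
    have I_all: "I = {..<N}" using I cI by (simp add: card_subset_eq)
    have "card ({..<Suc N} - J) = 1" using J cJ by (simp add: card_Diff_subset finite_subset)
    then obtain c where c: "{..<Suc N} - J = {c}" by (auto simp: card_Suc_eq)
    then have "J = {..<Suc N} - {c}" "c < Suc N" using J by auto
    then show "x \<in> (\<lambda>c. det (del_col A c)) ` {..<Suc N}"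
      using x I_all submatrix_del_col[OF A] by auto
  qed
  show "(\<lambda>c. det (del_col A c)) ` {..<Suc N} \<subseteq> minors A N"
  proof
    fix x assume "x \<in> (\<lambda>c. det (del_col A c)) ` {..<Suc N}"
    then obtain c where c: "c < Suc N" "x = det (del_col A c)" by auto
    then have "x = det (submatrix A {..<N} ({..<Suc N} - {c}))" using submatrix_del_col[OF A] by simp
    then show "x \<in> minors A N" unfolding minors_def using A c by (auto intro!: exI)
  qed
qed

text \<open>Multiplying on the left by an \<open>m \<times> l\<close> matrix having some \<open>l \<times> l\<close> minor equal to \<open>1\<close>
  does not change the ideal of \<open>l\<close>-minors: as \<open>A\<close> has exactly \<open>l\<close> columns, every \<open>l\<close>-minor of
  \<open>A B\<close> is an \<open>l\<close>-minor of \<open>A\<close> times one of \<open>B\<close>, and the unit minor of \<open>A\<close> recovers those of \<open>B\<close>.\<close>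
lemma ideal_minors_left_factor:
  fixes A B :: "'a::comm_ring_1 mat"
  assumes A: "A \<in> carrier_mat m l" and B: "B \<in> carrier_mat l k"
    and I0: "I0 \<subseteq> {..<m}" "card I0 = l" and one: "det (submatrix A I0 UNIV) = 1"
  shows "ideal_gen (minors (A * B) l) = ideal_gen (minors B l)"
proof
  have AB: "A * B \<in> carrier_mat m k" using A B by simp
  have cU: "{i. i < l \<and> i \<in> (UNIV::nat set)} = {..<l}" by auto
  have sA: "submatrix A I UNIV \<in> carrier_mat l l" if "I \<subseteq> {..<m}" "card I = l" for I
  proof -
    have cI: "{i. i < m \<and> i \<in> I} = I" using that by auto
    show ?thesis using A that by (auto simp: dim_submatrix cI cU)
  qed
  have sB: "submatrix B UNIV J \<in> carrier_mat l l" if "J \<subseteq> {..<k}" "card J = l" for J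
  proof -
    have cJ: "{i. i < k \<and> i \<in> J} = J" using that by auto
    show ?thesis using B that by (auto simp: dim_submatrix cJ cU)
  qed
  have minor_mult: "det (submatrix (A * B) I J) = det (submatrix A I UNIV) * det (submatrix B UNIV J)"
    if "I \<subseteq> {..<m}" "card I = l" "J \<subseteq> {..<k}" "card J = l" for I J
    using submatrix_mult[OF A B that(1,3)] det_mult[OF sA[OF that(1,2)] sB[OF that(3,4)]] by simp
  have B_minor: "det (submatrix B UNIV J) \<in> minors B l" if "J \<subseteq> {..<k}" "card J = l" for J
    unfolding minors_def submatrix_UNIV_rows using B that by (auto intro!: exI)
  show "ideal_gen (minors (A * B) l) \<subseteq> ideal_gen (minors B l)"
  proof (rule ideal_gen_least, rule)
    fix x assume "x \<in> minors (A * B) l"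
    then obtain I J where x: "x = det (submatrix (A*B) I J)" and IJ: "I \<subseteq> {..<m}" "card I = l"
      "J \<subseteq> {..<k}" "card J = l"
      using AB carrier_matD[OF A] carrier_matD[OF B] unfolding minors_def by auto
    show "x \<in> ideal_gen (minors B l)"
      using x minor_mult[OF IJ] ideal_gen_mult[OF ideal_gen_base[OF B_minor[OF IJ(3,4)]]] by simp
  qed
  show "ideal_gen (minors B l) \<subseteq> ideal_gen (minors (A * B) l)"
  proof (rule ideal_gen_least, rule)
    fix x assume "x \<in> minors B l"
    then obtain I J where x: "x = det (submatrix B I J)" and I: "I \<subseteq> {..<l}" "card I = l"
      and J: "J \<subseteq> {..<k}" "card J = l" using B unfolding minors_def by auto
    have "I = {..<l}" using I by (simp add: card_subset_eq)
    then have "x = det (submatrix (A*B) I0 J)"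
      using x minor_mult[OF I0 J] one B by (simp add: submatrix_UNIV_rows)
    then have "x \<in> minors (A*B) l"
      unfolding minors_def using AB I0 J carrier_matD[OF A] carrier_matD[OF B] by (auto intro!: exI)
    then show "x \<in> ideal_gen (minors (A * B) l)" by (rule ideal_gen_base)
  qed
qed


subsection \<open>Band matrices of multiplication maps\<close>

text \<open>Multiplication by a form with coefficient sequence \<open>F\<close> sends the monomial \<open>s\<^sup>j\<close> (of the
  multiplier) to the row of \<open>s\<^sup>k\<close> with coefficient \<open>band F k j\<close>.  The Sylvester-type matrices
  \<open>syl_map_mat\<close> consist of two such bands side by side.\<close>
definition band :: "(nat \<Rightarrow> 'a::zero) \<Rightarrow> nat \<Rightarrow> nat \<Rightarrow> 'a" where
  "band F k j = (if j \<le> k then F (k - j) else 0)"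

lemma syl_map_mat_dims[simp]:
  "dim_row (syl_map_mat nr r0 d e ka kb F G) = nr"
  "dim_col (syl_map_mat nr r0 d e ka kb F G) = ka + kb"
  "syl_map_mat nr r0 d e ka kb F G \<in> carrier_mat nr (ka + kb)"
  unfolding syl_map_mat_def by auto

lemma syl_map_mat_index:
  assumes "r < nr" "j < ka + kb" "\<forall>x>d. F x = 0" "\<forall>x>e. G x = 0"
  shows "syl_map_mat nr r0 d e ka kb F G $$ (r,j) =
     (if j < ka then band F (r+r0) j else band G (r+r0) (j-ka))"
  using assms unfolding syl_map_mat_def band_def Let_def by (auto simp: not_le)

text \<open>Coefficients of the linear form \<open>s - c v\<close>.\<close>
definition lin_coeffs :: "'a::comm_ring_1 \<Rightarrow> nat \<Rightarrow> 'a" where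
  "lin_coeffs c i = (if i = 0 then - c else if i = 1 then 1 else 0)"

text \<open>The relation \<open>F = (s - c v) F'\<close> between coefficient sequences, read off in one band entry.\<close>
lemma band_lin_step:
  fixes F F' :: "nat \<Rightarrow> 'a::comm_ring_1"
  assumes rel: "\<forall>i. F i = (if i = 0 then 0 else F' (i - 1)) - c * F' i"
    and top: "\<not> k < nr' \<Longrightarrow> j \<le> k \<Longrightarrow> F' (k - j) = 0"
  shows "(if k < nr' then - c * band F' k j else 0) + (if 1 \<le> k then band F' (k - 1) j else 0)
         = band F k j"
proof (cases "j \<le> k")
  case True
  then consider "j = k" | "j < k" by linarith
  then show ?thesis
  proof cases
    case 1
    then show ?thesis using rel[rule_format, of 0] top by (auto simp: band_def)
  next
    case 2
    then have "F (k - j) = F' (k - 1 - j) - c * F' (k - j)"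
      using rel[rule_format, of "k-j"] by auto
    then show ?thesis using 2 top by (auto simp: band_def)
  qed
qed (auto simp: band_def)

lemma sum_band_lin:
  fixes B :: "nat \<Rightarrow> 'a::comm_ring_1"
  shows "(\<Sum>k<N. band (lin_coeffs c) m k * B k) =
     (if m < N then - c * B m else 0) + (if 1 \<le> m \<and> m - 1 < N then B (m - 1) else 0)"
proof -
  have "\<And>k. band (lin_coeffs c) m k * B k =
      (if k = m then - c * B m else 0) + (if k = m - 1 \<and> 1 \<le> m then B (m-1) else 0)"
    by (auto simp: band_def lin_coeffs_def)
  then have "(\<Sum>k<N. band (lin_coeffs c) m k * B k) = (\<Sum>k<N. (if k = m then - c * B m else 0))
      + (\<Sum>k<N. (if k = m - 1 \<and> 1 \<le> m then B (m-1) else 0))"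
    by (simp add: sum.distrib)
  then show ?thesis by (auto simp: sum.delta)
qed

text \<open>Factoring a common linear factor out of both forms: if \<open>F = (s - c v) F'\<close> and
  \<open>G = (s - c v) G'\<close>, the Sylvester-type matrix of \<open>F, G\<close> is the band matrix of \<open>s - c v\<close>
  times that of \<open>F', G'\<close>.\<close>
lemma syl_map_mat_factor:
  fixes F G F' G' :: "nat \<Rightarrow> complex poly"
  assumes relF: "\<forall>i. F i = (if i = 0 then 0 else F' (i - 1)) - c * F' i"
    and relG: "\<forall>i. G i = (if i = 0 then 0 else G' (i - 1)) - c * G' i"
    and vF: "\<forall>x>d'. F' x = 0" and vG: "\<forall>x>e'. G' x = 0"
    and r0: "r0 \<le> 1" and nr: "nr + r0 \<le> nr' + 1"
    and kaF: "ka + d' \<le> nr'" and kbG: "kb + e' \<le> nr'"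
  shows "syl_map_mat nr r0 1 0 nr' 0 (lin_coeffs c) (\<lambda>_. 0) * syl_map_mat nr' 0 d' e' ka kb F' G'
       = syl_map_mat nr r0 (Suc d') (Suc e') ka kb F G"
proof (rule eq_matI)
  have vF': "\<forall>x>Suc d'. F x = 0" using relF vF by auto
  have vG': "\<forall>x>Suc e'. G x = 0" using relG vG by auto
  have vL: "\<forall>x>1. lin_coeffs c x = 0" by (auto simp: lin_coeffs_def)
  fix r j assume "r < dim_row (syl_map_mat nr r0 (Suc d') (Suc e') ka kb F G)"
    and "j < dim_col (syl_map_mat nr r0 (Suc d') (Suc e') ka kb F G)"
  then have r: "r < nr" and j: "j < ka + kb" by auto
  let ?L = "syl_map_mat nr r0 1 0 nr' 0 (lin_coeffs c) (\<lambda>_. 0)"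
  let ?B = "syl_map_mat nr' 0 d' e' ka kb F' G'"
  let ?col = "\<lambda>k. if j < ka then band F' k j else band G' k (j-ka)"
  have "(?L * ?B) $$ (r,j) = (\<Sum>k<nr'. ?L $$ (r,k) * ?B $$ (k,j))"
    using r j by (simp add: scalar_prod_def atLeast0LessThan)
  also have "\<dots> = (\<Sum>k<nr'. band (lin_coeffs c) (r+r0) k * ?col k)"
    by (rule sum.cong[OF refl]) (use r j vL vF vG in \<open>auto simp: syl_map_mat_index\<close>)
  also have "\<dots> = (if r+r0 < nr' then - c * ?col (r+r0) else 0) + (if 1 \<le> r+r0 then ?col (r+r0-1) else 0)"
    using sum_band_lin[of c "r+r0" ?col nr'] r nr by auto
  also have "\<dots> = (if j < ka then band F (r+r0) j else band G (r+r0) (j-ka))"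
  proof (cases "j < ka")
    case True
    have "(if r+r0 < nr' then - c * band F' (r+r0) j else 0) + (if 1 \<le> r+r0 then band F' (r+r0 - 1) j else 0)
         = band F (r+r0) j"
      by (rule band_lin_step[OF relF]) (use True vF kaF r nr in auto)
    then show ?thesis using True by (auto split: if_splits)
  next
    case False
    have "(if r+r0 < nr' then - c * band G' (r+r0) (j-ka) else 0)
        + (if 1 \<le> r+r0 then band G' (r+r0 - 1) (j-ka) else 0) = band G (r+r0) (j-ka)"
      by (rule band_lin_step[OF relG]) (use False j vG kbG r nr in auto)
    then show ?thesis using False by (auto split: if_splits)
  qed
  also have "\<dots> = syl_map_mat nr r0 (Suc d') (Suc e') ka kb F G $$ (r,j)"
    by (rule syl_map_mat_index[symmetric]) (use r j vF' vG' in auto)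
  finally show "(?L * ?B) $$ (r,j) = syl_map_mat nr r0 (Suc d') (Suc e') ka kb F G $$ (r,j)" .
qed auto

text \<open>The band matrix of \<open>s - c v\<close> with its first row removed is unitriangular.\<close>
lemma det_lin_band_shifted:
  fixes c :: "'a::comm_ring_1"
  shows "det (mat k k (\<lambda>(r,j). band (lin_coeffs c) (Suc r) j)) = 1"
proof -
  let ?M = "mat k k (\<lambda>(r,j). band (lin_coeffs c) (Suc r) j)"
  have "det ?M = prod_list (diag_mat ?M)"
    by (rule det_upper_triangular) (auto simp: upper_triangular_def band_def lin_coeffs_def)
  also have "diag_mat ?M = replicate k 1"
    by (rule nth_equalityI) (auto simp: diag_mat_def band_def lin_coeffs_def)
  finally show ?thesis by simp
qed

lemma sum_split_add: "(\<Sum>j<a+(b::nat). f j) = (\<Sum>j<a. f j) + (\<Sum>j<b. f (a+j))"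
  by (induction b) (auto simp: add.assoc)

lemma band_convolution:
  fixes F G :: "nat \<Rightarrow> 'a::comm_ring_1"
  assumes "\<forall>x>a. G x = 0"
  shows "(\<Sum>j<Suc a. band F r j * G j) = (\<Sum>j<Suc r. F (r-j) * G j)"
proof -
  have "(\<Sum>j<Suc a. band F r j * G j) = (\<Sum>j<Suc (a+r). band F r j * G j)"
    by (rule sum.mono_neutral_right[symmetric]) (use assms in auto)
  also have "\<dots> = (\<Sum>j<Suc r. band F r j * G j)"
    by (rule sum.mono_neutral_right) (auto simp: band_def)
  also have "\<dots> = (\<Sum>j<Suc r. F (r-j) * G j)"
    by (rule sum.cong) (auto simp: band_def)
  finally show ?thesis .
qed

text \<open>The Koszul vector \<open>(G, -F)\<close>: coordinates of the pair of multipliers \<open>(\<alpha>,\<beta>) = (G, -F)\<close>.\<close>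
definition koszul_vec :: "nat \<Rightarrow> (nat \<Rightarrow> 'a::comm_ring_1) \<Rightarrow> (nat \<Rightarrow> 'a) \<Rightarrow> nat \<Rightarrow> 'a" where
  "koszul_vec a2 F G c = (if c < Suc a2 then G c else - F (c - Suc a2))"

text \<open>Since \<open>G F - F G = 0\<close>, the Koszul vector lies in the kernel of the Sylvester map of
  \<open>F, G\<close> (of degrees \<open>a1, a2\<close>) with multipliers of degrees \<open>a2, a1\<close>.\<close>
lemma koszul_vec_kernel:
  fixes F G :: "nat \<Rightarrow> complex poly"
  assumes vF: "\<forall>x>a1. F x = 0" and vG: "\<forall>x>a2. G x = 0"
  shows "syl_map_mat N 0 a1 a2 (Suc a2) (Suc a1) F G *\<^sub>v vec (Suc a2 + Suc a1) (koszul_vec a2 F G)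
       = 0\<^sub>v N"
proof (rule eq_vecI)
  fix r assume "r < dim_vec (0\<^sub>v N :: complex poly vec)"
  then have r: "r < N" by simp
  let ?A = "syl_map_mat N 0 a1 a2 (Suc a2) (Suc a1) F G"
  let ?x = "koszul_vec a2 F G"
  have "(?A *\<^sub>v vec (Suc a2 + Suc a1) ?x) $ r = (\<Sum>j<Suc a2 + Suc a1. ?A $$ (r,j) * ?x j)"
    using r by (simp add: scalar_prod_def atLeast0LessThan)
  also have "\<dots> = (\<Sum>j<Suc a2. ?A $$ (r,j) * ?x j) + (\<Sum>j<Suc a1. ?A $$ (r,Suc a2 + j) * ?x (Suc a2 + j))"
    by (rule sum_split_add)
  also have "\<dots> = (\<Sum>j<Suc a2. band F r j * G j) - (\<Sum>j<Suc a1. band G r j * F j)"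
    using r vF vG by (simp add: syl_map_mat_index koszul_vec_def sum_negf[symmetric])
  also have "(\<Sum>j<Suc a2. band F r j * G j) = (\<Sum>j<Suc r. F (r-j) * G j)" by (rule band_convolution[OF vG])
  also have "(\<Sum>j<Suc a1. band G r j * F j) = (\<Sum>j<Suc r. G (r-j) * F j)" by (rule band_convolution[OF vF])
  also have "\<dots> = (\<Sum>j<Suc r. G (r - (Suc r - Suc j)) * F (Suc r - Suc j))"
    by (rule sum.nat_diff_reindex[symmetric])
  also have "\<dots> = (\<Sum>j<Suc r. F (r-j) * G j)" by (rule sum.cong) auto
  finally show "(?A *\<^sub>v vec (Suc a2 + Suc a1) ?x) $ r = 0\<^sub>v N $ r" using r by simp
qed auto


subsection \<open>Maximal minors of a Sylvester map with one extra row\<close>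

text \<open>For forms \<open>F, G\<close> of degrees \<open>a1, a2\<close>: the \<open>(a1+a2+1) \<times> (a1+a2+2)\<close> matrix of
  \<open>(\<alpha>,\<beta>) \<mapsto> \<alpha> F + \<beta> G\<close> with \<open>deg \<alpha> = a2\<close>, \<open>deg \<beta> = a1\<close>, and the square Sylvester matrix
  with \<open>deg \<alpha> = a2 - 1\<close>, \<open>deg \<beta> = a1 - 1\<close> (whose determinant is the resultant).\<close>
definition wide_sylvester :: "nat \<Rightarrow> nat \<Rightarrow> (nat \<Rightarrow> complex poly) \<Rightarrow> (nat \<Rightarrow> complex poly) \<Rightarrow> complex poly mat"
  where "wide_sylvester a1 a2 F G = syl_map_mat (Suc (a1+a2)) 0 a1 a2 (Suc a2) (Suc a1) F G"

definition square_sylvester :: "nat \<Rightarrow> nat \<Rightarrow> (nat \<Rightarrow> complex poly) \<Rightarrow> (nat \<Rightarrow> complex poly) \<Rightarrow> complex poly mat"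
  where "square_sylvester a1 a2 F G = syl_map_mat (a1+a2) 0 a1 a2 a2 a1 F G"

context
  fixes a1 a2 :: nat and F G :: "nat \<Rightarrow> complex poly"
  assumes F_vanish: "\<forall>x>a1. F x = 0" and G_vanish: "\<forall>x>a2. G x = 0"
begin

lemma wide_sylvester_carrier: "wide_sylvester a1 a2 F G \<in> carrier_mat (Suc (a1+a2)) (Suc (Suc (a1+a2)))"
  unfolding wide_sylvester_def carrier_mat_def by simp

lemma square_sylvester_carrier: "square_sylvester a1 a2 F G \<in> carrier_mat (a1+a2) (a1+a2)"
  unfolding square_sylvester_def carrier_mat_def by simp

lemma wide_sylvester_index:
  "r < Suc (a1+a2) \<Longrightarrow> j < Suc (Suc (a1+a2)) \<Longrightarrow> wide_sylvester a1 a2 F G $$ (r,j) =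
     (if j < Suc a2 then band F r j else band G r (j - Suc a2))"
  unfolding wide_sylvester_def using F_vanish G_vanish by (simp add: syl_map_mat_index)

lemma square_sylvester_index:
  "r < a1+a2 \<Longrightarrow> j < a1+a2 \<Longrightarrow> square_sylvester a1 a2 F G $$ (r,j) =
     (if j < a2 then band F r j else band G r (j - a2))"
  unfolding square_sylvester_def using F_vanish G_vanish by (simp add: syl_map_mat_index)

text \<open>Deleting the last \<open>\<alpha>\<close>-column leaves \<open>G a2\<close> alone in the last row; the rest is the square
  Sylvester matrix.\<close>
lemma wide_sylvester_del_last_alpha:
  "det (del_col (wide_sylvester a1 a2 F G) a2) = G a2 * det (square_sylvester a1 a2 F G)"
proof -
  let ?C = "del_col (wide_sylvester a1 a2 F G) a2"
  have C: "?C \<in> carrier_mat (Suc (a1+a2)) (Suc (a1+a2))" by (rule del_col_carrier[OF wide_sylvester_carrier])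
  have "det ?C = G a2 * (-1)^(a1+a2+(a1+a2)) * det (mat_delete ?C (a1+a2) (a1+a2))"
  proof (rule det_single_entry_row[OF C])
    fix j assume "j < Suc (a1+a2)"
    then show "?C $$ (a1 + a2, j) = (if j = a1 + a2 then G a2 else 0)"
      using G_vanish F_vanish wide_sylvester_carrier
      by (auto simp: del_col_index wide_sylvester_index insert_index_def band_def)
  qed auto
  also have "mat_delete ?C (a1+a2) (a1+a2) = square_sylvester a1 a2 F G"
    by (rule eq_matI) (use wide_sylvester_carrier square_sylvester_carrier in
        \<open>auto simp: mat_delete_def del_col_index wide_sylvester_index square_sylvester_index insert_index_def
          carrier_matD[OF wide_sylvester_carrier]\<close>)
  finally show ?thesis by (simp add: power_add[symmetric] mult_2[symmetric] power_mult)
qed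

text \<open>Deleting the last \<open>\<beta>\<close>-column leaves \<open>F a1\<close> alone in the last row.\<close>
lemma wide_sylvester_del_last_beta:
  "det (del_col (wide_sylvester a1 a2 F G) (Suc (a1+a2)))
     = (-1)^a1 * F a1 * det (square_sylvester a1 a2 F G)"
proof -
  let ?C = "del_col (wide_sylvester a1 a2 F G) (Suc (a1+a2))"
  have C: "?C \<in> carrier_mat (Suc (a1+a2)) (Suc (a1+a2))" by (rule del_col_carrier[OF wide_sylvester_carrier])
  have "det ?C = F a1 * (-1)^(a1+a2+a2) * det (mat_delete ?C (a1+a2) a2)"
  proof (rule det_single_entry_row[OF C])
    fix j assume "j < Suc (a1+a2)"
    then show "?C $$ (a1 + a2, j) = (if j = a2 then F a1 else 0)"
      using G_vanish F_vanish wide_sylvester_carrier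
      by (auto simp: del_col_index wide_sylvester_index insert_index_def band_def)
  qed auto
  also have "mat_delete ?C (a1+a2) a2 = square_sylvester a1 a2 F G"
    by (rule eq_matI) (use wide_sylvester_carrier square_sylvester_carrier in
        \<open>auto simp: mat_delete_def del_col_index wide_sylvester_index square_sylvester_index insert_index_def
          carrier_matD[OF wide_sylvester_carrier]\<close>)
  finally show ?thesis by (simp add: power_add mult_2[symmetric] power_mult)
qed

text \<open>If both leading coefficients vanish, the last rows of both matrices are zero.\<close>
lemma wide_sylvester_degenerate:
  assumes F0: "F a1 = 0" and G0: "G a2 = 0" and pos: "1 \<le> a1 + a2"
  shows "det (del_col (wide_sylvester a1 a2 F G) c) = 0" and "det (square_sylvester a1 a2 F G) = 0"
proof -
  have F_high: "F x = 0" if "x \<ge> a1" for x using F0 F_vanish that by (cases "x = a1") auto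
  have G_high: "G x = 0" if "x \<ge> a2" for x using G0 G_vanish that by (cases "x = a2") auto
  show "det (del_col (wide_sylvester a1 a2 F G) c) = 0"
    by (rule det_zero_row[OF del_col_carrier[OF wide_sylvester_carrier], of "a1+a2"])
      (use wide_sylvester_carrier in \<open>auto simp: del_col_index wide_sylvester_index insert_index_def
        band_def F_high G_high\<close>)
  show "det (square_sylvester a1 a2 F G) = 0"
    by (rule det_zero_row[OF square_sylvester_carrier, of "a1+a2-1"])
      (use pos in \<open>auto simp: square_sylvester_index band_def F_high G_high\<close>)
qed

text \<open>By Cramer's rule the signed minors are
  proportional to the kernel vector; the constant is found at a column where the Koszul
  coordinate is a leading coefficient.\<close>
lemma wide_sylvester_maximal_minor:
  assumes pos: "1 \<le> a1 + a2" and c: "c < Suc (Suc (a1+a2))"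
  shows "(-1)^c * det (del_col (wide_sylvester a1 a2 F G) c)
       = (-1)^a2 * det (square_sylvester a1 a2 F G) * koszul_vec a2 F G c"
proof -
  let ?W = "wide_sylvester a1 a2 F G" and ?R = "det (square_sylvester a1 a2 F G)"
    and ?x = "koszul_vec a2 F G"
  have ker: "?W *\<^sub>v vec (Suc (Suc (a1+a2))) ?x = 0\<^sub>v (Suc (a1+a2))"
    using koszul_vec_kernel[OF F_vanish G_vanish, of "Suc (a1+a2)"]
    unfolding wide_sylvester_def by (simp add: add.commute)
  have rel: "?x i * ((-1)^c * det (del_col ?W c)) = ?x c * ((-1)^i * det (del_col ?W i))"
    if "i < Suc (Suc (a1+a2))" for i
    using kernel_maximal_minors[OF wide_sylvester_carrier _ ker c that] c that by simp
  consider "G a2 \<noteq> 0" | "G a2 = 0" "F a1 \<noteq> 0" | "G a2 = 0" "F a1 = 0" by blast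
  then show ?thesis
  proof cases
    case 1
    have "G a2 * ((-1)^c * det (del_col ?W c)) = G a2 * ((-1)^a2 * ?R * ?x c)"
      using rel[of a2] wide_sylvester_del_last_alpha by (simp add: koszul_vec_def ac_simps)
    then show ?thesis using 1 by simp
  next
    case 2
    have sgn: "(-1::complex poly)^Suc (a1+a2) * (-1)^a1 = - ((-1)^a2)"
      by (simp add: power_add power_mult_distrib[symmetric])
    have "- F a1 * ((-1)^c * det (del_col ?W c))
        = ?x c * (((-1)^Suc (a1+a2) * (-1)^a1) * F a1 * ?R)"
      using rel[of "Suc (a1+a2)"] wide_sylvester_del_last_beta by (simp add: koszul_vec_def ac_simps)
    also have "\<dots> = - F a1 * ((-1)^a2 * ?R * ?x c)" unfolding sgn by (simp add: ac_simps)
    finally show ?thesis using 2 by simp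
  next
    case 3
    then show ?thesis using wide_sylvester_degenerate[OF _ _ pos] by simp
  qed
qed

end

subsection \<open>Band minors that are triangular modulo \<open>t - t\<^sub>0\<close>\<close>

interpretation poly_eval: comm_ring_hom "\<lambda>f::complex poly. poly f t0"
  by unfold_locales auto

text \<open>A \<open>k \<times> k\<close> block of a band of \<open>H\<close> starting at row \<open>x\<close>, where \<open>H\<close> vanishes at \<open>t\<^sub>0\<close> below
  index \<open>x\<close>, is lower triangular at \<open>t\<^sub>0\<close> with diagonal \<open>H x\<close>.\<close>
lemma band_minor_triangular:
  fixes H :: "nat \<Rightarrow> complex poly"
  assumes M: "M \<in> carrier_mat m l" and x: "x + k \<le> m" and y: "y + k \<le> l"
    and ent: "\<And>r j. r < k \<Longrightarrow> j < k \<Longrightarrow> M $$ (x+r, y+j) = band H (x+r) j"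
    and below: "\<forall>i<x. poly (H i) t0 = 0"
  shows "poly (det (submatrix M {x..<x+k} {y..<y+k})) t0 = poly (H x) t0 ^ k"
proof -
  let ?S = "mat k k (\<lambda>(r,j). M $$ (x+r, y+j))"
  have "poly (det ?S) t0 = det (map_mat (\<lambda>f. poly f t0) ?S)" by (rule poly_eval.hom_det[symmetric])
  also have "\<dots> = poly (H x) t0 ^ k"
  proof (rule det_lower_triangular_const_diag)
    fix i j assume "i < j" "j < k"
    then show "map_mat (\<lambda>f. poly f t0) ?S $$ (i, j) = 0"
      using below ent[of i j] by (auto simp: band_def)
  next
    fix i assume "i < k"
    then show "map_mat (\<lambda>f. poly f t0) ?S $$ (i, i) = poly (H x) t0"
      using ent[of i i] by (auto simp: band_def)
  qed auto
  finally show ?thesis using submatrix_intervals[OF M x y] by simp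
qed

text \<open>Hence if some coefficient of \<open>H\<close> does not vanish at \<open>t\<^sub>0\<close>, one of these band minors
  does not vanish at \<open>t\<^sub>0\<close> either: start at the first such coefficient.\<close>
lemma band_minor_nonvanishing:
  fixes H :: "nat \<Rightarrow> complex poly"
  assumes M: "M \<in> carrier_mat m l" and H_vanish: "\<forall>i>h. H i = 0" and hk: "h + k \<le> m" and y: "y + k \<le> l"
    and ent: "\<And>r j. r < m \<Longrightarrow> j < k \<Longrightarrow> M $$ (r, y+j) = band H r j"
    and nz: "poly (H i) t0 \<noteq> 0"
  shows "\<exists>x\<le>h. poly (det (submatrix M {x..<x+k} {y..<y+k})) t0 \<noteq> 0"
proof -
  define x where "x = (LEAST i. poly (H i) t0 \<noteq> 0)"
  have Hx: "poly (H x) t0 \<noteq> 0" unfolding x_def by (rule LeastI[of _ i]) (rule nz)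
  have below: "\<forall>i<x. poly (H i) t0 = 0" unfolding x_def using not_less_Least by blast
  have "x \<le> h"
  proof (rule ccontr)
    assume "\<not> x \<le> h"
    then show False using Hx H_vanish by simp
  qed
  moreover have "poly (det (submatrix M {x..<x+k} {y..<y+k})) t0 = poly (H x) t0 ^ k"
    by (rule band_minor_triangular[OF M _ y _ below]) (use \<open>x \<le> h\<close> hk ent in auto)
  ultimately show ?thesis using Hx by auto
qed


subsection \<open>Two forms vanishing on the line \<open>s = t v\<close>\<close>

text \<open>Coefficients of the quotient of a form of degree \<open>d\<close> (coefficients \<open>F\<close> in \<open>\<complex>[t]\<close>) by
  \<open>s - t v\<close>, by synthetic division.\<close>
definition lin_quotient :: "(nat \<Rightarrow> complex poly) \<Rightarrow> nat \<Rightarrow> nat \<Rightarrow> complex poly" where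
  "lin_quotient F d i = (\<Sum>j\<in>{i<..d}. F j * [:0,1:] ^ (j - Suc i))"

lemma lin_quotient_vanish: "x \<ge> d \<Longrightarrow> lin_quotient F d x = 0"
  unfolding lin_quotient_def by simp

text \<open>If the form vanishes at \<open>(s,v) = (t,1)\<close>, it equals \<open>(s - t v)\<close> times the quotient.\<close>
lemma lin_quotient_factor:
  assumes v: "\<forall>x>d. F x = 0" and root: "(\<Sum>j\<le>d. F j * [:0,1:] ^ j) = 0"
  shows "F i = (if i = 0 then 0 else lin_quotient F d (i - 1)) - [:0,1:] * lin_quotient F d i"
proof -
  let ?T = "[:0,1:] :: complex poly"
  have T_quot: "?T * lin_quotient F d i = (\<Sum>j\<in>{i<..d}. F j * ?T ^ (j - i))"
    unfolding lin_quotient_def sum_distrib_left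
  proof (rule sum.cong[OF refl])
    fix j assume "j \<in> {i<..d}"
    then have "j - i = Suc (j - Suc i)" by auto
    then show "?T * (F j * ?T ^ (j - Suc i)) = F j * ?T ^ (j - i)" by (simp add: ac_simps)
  qed
  consider "i = 0" | "0 < i" "i \<le> d" | "d < i" by linarith
  then show ?thesis
  proof cases
    case 1
    have "{..d} = insert 0 {0<..d}" by auto
    then have "(\<Sum>j\<le>d. F j * ?T ^ j) = F 0 + (\<Sum>j\<in>{0<..d}. F j * ?T ^ j)" by simp
    then show ?thesis using 1 T_quot root by (simp add: eq_neg_iff_add_eq_0 add.commute)
  next
    case 2
    have "lin_quotient F d (i - 1) = (\<Sum>j\<in>{i..d}. F j * ?T ^ (j - i))"
      unfolding lin_quotient_def using 2 by (intro sum.cong) auto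
    also have "{i..d} = insert i {i<..d}" using 2 by auto
    finally show ?thesis using 2 T_quot by simp
  next
    case 3
    then show ?thesis using v by (simp add: lin_quotient_def)
  qed
qed

text \<open>The abstract setting: coefficient sequences \<open>P\<close>, \<open>Q\<close> (over \<open>\<complex>[t]\<close>) of forms in \<open>(s,v)\<close>
  of degrees \<open>d\<close>, \<open>e\<close>, both vanishing at \<open>(s,v) = (t,1)\<close>, whose coefficients have no common root.\<close>
locale line_vanishing_pair =
  fixes P Q :: "nat \<Rightarrow> complex poly" and d e :: nat
  assumes P_vanish: "\<forall>x>d. P x = 0" and Q_vanish: "\<forall>x>e. Q x = 0"
    and P_on_line: "(\<Sum>j\<le>d. P j * [:0,1:] ^ j) = 0" and Q_on_line: "(\<Sum>j\<le>e. Q j * [:0,1:] ^ j) = 0"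
    and no_common_root: "\<And>t0. \<exists>i. poly (P i) t0 \<noteq> 0 \<or> poly (Q i) t0 \<noteq> 0"
    and degree_sum: "3 \<le> d + e"
begin

abbreviation sylvester :: "complex poly mat" where
  "sylvester \<equiv> syl_map_mat (d+e) 0 d e e d P Q"

abbreviation subres :: "complex poly" where
  "subres \<equiv> det (syl_map_mat (d+e-2) 1 d e (e-1) (d-1) P Q)"

lemma sylvester_carrier: "sylvester \<in> carrier_mat (d+e) (d+e)"
  using syl_map_mat_dims(3)[of "d+e" 0 d e e d P Q] by (simp add: add.commute)

lemma sylvester_index:
  "r < d + e \<Longrightarrow> j < d + e \<Longrightarrow> sylvester $$ (r,j) = (if j < e then band P r j else band Q r (j-e))"
  using P_vanish Q_vanish by (simp add: syl_map_mat_index add.commute)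

text \<open>If one degree is zero, that form is zero and all columns belong to it.\<close>
lemma sylvester_degenerate:
  assumes "d = 0 \<or> e = 0" and "r < d + e" and "j < d + e"
  shows "sylvester $$ (r,j) = 0"
proof -
  have "P x = 0" if "d = 0" for x using P_vanish P_on_line that by (cases "x = 0") auto
  moreover have "Q x = 0" if "e = 0" for x using Q_vanish Q_on_line that by (cases "x = 0") auto
  ultimately show ?thesis using assms sylvester_index by (auto simp: band_def)
qed

text \<open>\<open>\<FF>\<^sub>l\<close> is the unit ideal as soon as the minor size \<open>k = d + e - l\<close> is at most \<open>d\<close> and \<open>e\<close>:
  the \<open>k\<close>-minors of consecutive rows inside one band have no common root.\<close>
lemma fitting_ideal_large:
  assumes "d + e - l \<le> d" and "d + e - l \<le> e"
  shows "fitting_ideal sylvester l = UNIV"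
proof (cases "d + e \<le> l")
  case True
  then show ?thesis by (intro fitting_ideal_beyond_rows) simp
next
  case False
  define k where "k = d + e - l"
  have k: "k \<le> d" "k \<le> e" using assms unfolding k_def by auto
  let ?S = sylvester
  define X where "X = (\<lambda>x. det (submatrix ?S {x..<x+k} {0..<0+k})) ` {..d}
      \<union> (\<lambda>x. det (submatrix ?S {x..<x+k} {e..<e+k})) ` {..e}"
  have block_minor: "det (submatrix ?S {x..<x+k} {y..<y+k}) \<in> minors ?S k"
    if "x + k \<le> d + e" "y + k \<le> d + e" for x y
  proof -
    have "{x..<x+k} \<subseteq> {..<d+e}" "{y..<y+k} \<subseteq> {..<d+e}" using that by auto
    then show ?thesis
      unfolding minors_def using carrier_matD[OF sylvester_carrier] by (intro CollectI exI) auto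
  qed
  have "X \<subseteq> minors ?S k"
    unfolding X_def using k by (auto intro!: block_minor block_minor[of _ 0, simplified])
  moreover have "1 \<in> ideal_gen X"
  proof (rule one_in_ideal_gen_if_no_common_root)
    show "finite X" unfolding X_def by simp
    fix t0
    obtain i where "poly (P i) t0 \<noteq> 0 \<or> poly (Q i) t0 \<noteq> 0" using no_common_root by blast
    then show "\<exists>x\<in>X. poly x t0 \<noteq> 0"
    proof
      assume "poly (P i) t0 \<noteq> 0"
      have "\<exists>x\<le>d. poly (det (submatrix ?S {x..<x+k} {0..<0+k})) t0 \<noteq> 0"
        by (rule band_minor_nonvanishing[OF sylvester_carrier P_vanish _ _ _ \<open>poly (P i) t0 \<noteq> 0\<close>])
          (use k in \<open>auto simp: sylvester_index\<close>)
      then show ?thesis unfolding X_def by blast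
    next
      assume "poly (Q i) t0 \<noteq> 0"
      have "\<exists>x\<le>e. poly (det (submatrix ?S {x..<x+k} {e..<e+k})) t0 \<noteq> 0"
        by (rule band_minor_nonvanishing[OF sylvester_carrier Q_vanish _ _ _ \<open>poly (Q i) t0 \<noteq> 0\<close>])
          (use k in \<open>auto simp: sylvester_index\<close>)
      then show ?thesis unfolding X_def by blast
    qed
  qed
  ultimately have "1 \<in> ideal_gen (minors ?S k)"
    using ideal_gen_least[of X "minors ?S k"] ideal_gen_base by blast
  then show ?thesis unfolding fitting_ideal_def k_def using sylvester_carrier ideal_gen_eq_UNIV by simp
qed

end

text \<open>The nondegenerate case \<open>d, e \<ge> 1\<close>, where the linear factor \<open>s - t v\<close> can be split off.\<close>
locale line_vanishing_pair_reduced = line_vanishing_pair +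
  fixes a1 a2 :: nat
  assumes d_eq: "d = Suc a1" and e_eq: "e = Suc a2"
begin

definition P' :: "nat \<Rightarrow> complex poly" where "P' = lin_quotient P d"
definition Q' :: "nat \<Rightarrow> complex poly" where "Q' = lin_quotient Q e"

text \<open>The band matrix of multiplication by \<open>s - t v\<close> into forms of degree \<open>d + e - 1\<close>.\<close>
definition lin_band :: "complex poly mat" where
  "lin_band = syl_map_mat (d+e) 0 1 0 (Suc (a1+a2)) 0 (lin_coeffs [:0,1:]) (\<lambda>_. 0)"

lemma degree_sum_eq: "d + e = Suc (Suc (a1 + a2))"
  using d_eq e_eq by simp

lemma P'_vanish: "\<forall>x>a1. P' x = 0" and Q'_vanish: "\<forall>x>a2. Q' x = 0"
  unfolding P'_def Q'_def using d_eq e_eq by (auto intro: lin_quotient_vanish)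

lemma P_factor: "\<forall>i. P i = (if i = 0 then 0 else P' (i - 1)) - [:0,1:] * P' i"
  unfolding P'_def using lin_quotient_factor[OF P_vanish P_on_line] by blast

lemma Q_factor: "\<forall>i. Q i = (if i = 0 then 0 else Q' (i - 1)) - [:0,1:] * Q' i"
  unfolding Q'_def using lin_quotient_factor[OF Q_vanish Q_on_line] by blast

lemma lin_band_carrier: "lin_band \<in> carrier_mat (d+e) (Suc (a1+a2))"
  unfolding lin_band_def carrier_mat_def by simp

lemma sylvester_factor: "sylvester = lin_band * wide_sylvester a1 a2 P' Q'"
proof -
  have "lin_band * wide_sylvester a1 a2 P' Q' = syl_map_mat (d+e) 0 (Suc a1) (Suc a2) (Suc a2) (Suc a1) P Q"
    unfolding lin_band_def wide_sylvester_def
    by (rule syl_map_mat_factor[OF P_factor Q_factor P'_vanish Q'_vanish]) (use d_eq e_eq in auto)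
  then show ?thesis using d_eq e_eq by simp
qed

lemma lin_band_lower_minor: "det (submatrix lin_band {1..<d+e} UNIV) = 1"
proof -
  have "submatrix lin_band {1..<d+e} UNIV = submatrix lin_band {1..<1 + Suc (a1+a2)} {0..<0 + Suc (a1+a2)}"
    unfolding submatrix_UNIV_cols using lin_band_carrier degree_sum_eq by (simp add: atLeast0LessThan)
  also have "\<dots> = mat (Suc (a1+a2)) (Suc (a1+a2)) (\<lambda>(r,j). lin_band $$ (1+r, 0+j))"
    by (rule submatrix_intervals[OF lin_band_carrier]) (use degree_sum_eq in auto)
  also have "\<dots> = mat (Suc (a1+a2)) (Suc (a1+a2)) (\<lambda>(r,j). band (lin_coeffs [:0,1:]) (Suc r) j)"
    by (rule eq_matI)
      (use degree_sum_eq in \<open>auto simp: lin_band_def syl_map_mat_index lin_coeffs_def\<close>)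
  finally show ?thesis using det_lin_band_shifted by simp
qed

text \<open>Splitting \<open>s - t v\<close> off the subresultant matrix as well: \<open>\<Delta>\<close> is the resultant of \<open>P', Q'\<close>.\<close>
lemma subres_eq: "subres = det (square_sylvester a1 a2 P' Q')"
proof -
  define N where "N = syl_map_mat (a1+a2) 1 1 0 (a1+a2) 0 (lin_coeffs [:0,1:]) (\<lambda>_. 0)"
  have N_car: "N \<in> carrier_mat (a1+a2) (a1+a2)" unfolding N_def carrier_mat_def by simp
  have "N * square_sylvester a1 a2 P' Q' = syl_map_mat (a1+a2) 1 (Suc a1) (Suc a2) a2 a1 P Q"
    unfolding N_def square_sylvester_def
    by (rule syl_map_mat_factor[OF P_factor Q_factor P'_vanish Q'_vanish]) auto
  moreover have "N = mat (a1+a2) (a1+a2) (\<lambda>(r,j). band (lin_coeffs [:0,1:]) (Suc r) j)"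
    unfolding N_def by (rule eq_matI) (auto simp: syl_map_mat_index lin_coeffs_def)
  then have "det N = 1" using det_lin_band_shifted by simp
  ultimately show ?thesis
    using det_mult[OF N_car square_sylvester_carrier[OF P'_vanish Q'_vanish]] d_eq e_eq by simp
qed

text \<open>The coordinates of the Koszul vector \<open>(Q', -P')\<close> have no common root, since by the
  factorisation a common root would also be a common root of all \<open>P i\<close>, \<open>Q i\<close>.\<close>
lemma koszul_no_common_root: "\<exists>c<Suc (Suc (a1+a2)). poly (koszul_vec a2 P' Q' c) t0 \<noteq> 0"
proof (rule ccontr)
  assume "\<not> ?thesis"
  then have z: "\<And>c. c < Suc (Suc (a1+a2)) \<Longrightarrow> poly (koszul_vec a2 P' Q' c) t0 = 0" by auto
  have Q'_root: "poly (Q' j) t0 = 0" for j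
    using z[of j] Q'_vanish by (cases "j < Suc a2") (auto simp: koszul_vec_def)
  have P'_root: "poly (P' j) t0 = 0" for j
    using z[of "Suc a2 + j"] P'_vanish by (cases "j < Suc a1") (auto simp: koszul_vec_def)
  have "poly (P i) t0 = 0" "poly (Q i) t0 = 0" for i
    using P_factor Q_factor P'_root Q'_root by auto
  then show False using no_common_root[of t0] by blast
qed

lemma det_sylvester_zero: "det sylvester = 0"
proof -
  let ?v = "vec (d+e) (koszul_vec a2 P' Q')"
  have W_car: "wide_sylvester a1 a2 P' Q' \<in> carrier_mat (Suc (a1+a2)) (d+e)"
    using wide_sylvester_carrier[OF P'_vanish Q'_vanish] d_eq e_eq by simp
  obtain c where c: "c < d + e" "poly (koszul_vec a2 P' Q' c) 0 \<noteq> 0"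
    using koszul_no_common_root[of 0] d_eq e_eq by auto
  have "?v \<noteq> 0\<^sub>v (d+e)"
  proof
    assume "?v = 0\<^sub>v (d+e)"
    then have "?v $ c = 0" using c by simp
    then show False using c by simp
  qed
  moreover have "wide_sylvester a1 a2 P' Q' *\<^sub>v ?v = 0\<^sub>v (Suc (a1+a2))"
    using koszul_vec_kernel[OF P'_vanish Q'_vanish, of "Suc (a1+a2)"] d_eq e_eq
    unfolding wide_sylvester_def by (simp add: add.commute)
  then have "sylvester *\<^sub>v ?v = 0\<^sub>v (d+e)"
    unfolding sylvester_factor using assoc_mult_mat_vec[OF lin_band_carrier W_car, of ?v]
      lin_band_carrier by auto
  moreover have "?v \<in> carrier_vec (d+e)" by simp
  ultimately show ?thesis using det_0_iff_vec_prod_zero[OF sylvester_carrier] by blast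
qed

lemma fitting_ideal_one_reduced: "fitting_ideal sylvester 1 = ideal_gen {subres}"
proof -
  let ?W = "wide_sylvester a1 a2 P' Q'" and ?R = "det (square_sylvester a1 a2 P' Q')"
  have W_car: "?W \<in> carrier_mat (Suc (a1+a2)) (Suc (Suc (a1+a2)))"
    by (rule wide_sylvester_carrier[OF P'_vanish Q'_vanish])
  have "fitting_ideal sylvester 1 = ideal_gen (minors (lin_band * ?W) (Suc (a1+a2)))"
    unfolding fitting_ideal_def sylvester_factor using lin_band_carrier W_car d_eq e_eq by simp
  also have "\<dots> = ideal_gen (minors ?W (Suc (a1+a2)))"
    by (rule ideal_minors_left_factor[OF lin_band_carrier W_car _ _ lin_band_lower_minor])
      (use d_eq e_eq in auto)
  also have "minors ?W (Suc (a1+a2)) = (\<lambda>c. det (del_col ?W c)) ` {..<Suc (Suc (a1+a2))}"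
    by (rule maximal_minors_wide[OF W_car])
  also have "ideal_gen \<dots> = ideal_gen {?R}"
  proof (rule ideal_gen_proportional)
    fix c assume "c \<in> {..<Suc (Suc (a1+a2))}"
    then have "(-1)^c * det (del_col ?W c) = (-1)^a2 * ?R * koszul_vec a2 P' Q' c"
      using wide_sylvester_maximal_minor[OF P'_vanish Q'_vanish] degree_sum d_eq e_eq by simp
    then show "((-1)^a2 * (-1)^c) * det (del_col ?W c) = ?R * koszul_vec a2 P' Q' c"
      by (simp add: ac_simps power_mult_distrib[symmetric])
    show "((-1::complex poly)^a2 * (-1)^c) * ((-1)^a2 * (-1)^c) = 1"
      by (simp add: power_mult_distrib[symmetric] ac_simps)
  next
    show "1 \<in> ideal_gen (koszul_vec a2 P' Q' ` {..<Suc (Suc (a1+a2))})"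
      by (rule one_in_ideal_gen_if_no_common_root) (use koszul_no_common_root in auto)
  qed
  finally show ?thesis unfolding subres_eq .
qed

end

context line_vanishing_pair
begin

lemma reduced_if_nondegenerate:
  assumes "d \<noteq> 0" "e \<noteq> 0"
  shows "line_vanishing_pair_reduced P Q d e (d - 1) (e - 1)"
  by (intro line_vanishing_pair_reduced.intro line_vanishing_pair_axioms
      line_vanishing_pair_reduced_axioms.intro) (use assms in auto)

lemma fitting_ideal_zero: "fitting_ideal sylvester 0 = {0}"
proof -
  have "det sylvester = 0"
  proof (cases "d = 0 \<or> e = 0")
    case True
    show ?thesis
      by (rule det_zero_row[OF sylvester_carrier, of 0]) (use degree_sum in \<open>auto intro: sylvester_degenerate[OF True]\<close>)
  next
    case False
    then show ?thesis
      using line_vanishing_pair_reduced.det_sylvester_zero[OF reduced_if_nondegenerate] by blast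
  qed
  then show ?thesis
    using fitting_ideal_0_square[OF sylvester_carrier] ideal_gen_zero_singleton by simp
qed

lemma fitting_ideal_one: "fitting_ideal sylvester 1 = ideal_gen {subres}"
proof (cases "d = 0 \<or> e = 0")
  case True
  \<comment> \<open>the sylvester matrix is zero and the subresultant matrix is not square\<close>
  have "fitting_ideal sylvester 1 = {0}"
    unfolding fitting_ideal_def
    by (rule ideal_minors_zero_matrix) (use sylvester_degenerate True degree_sum in auto)
  moreover have "subres = 0"
    unfolding det_def using True degree_sum by auto
  ultimately show ?thesis by (simp add: ideal_gen_zero_singleton)
next
  case False
  then show ?thesis
    using line_vanishing_pair_reduced.fitting_ideal_one_reduced[OF reduced_if_nondegenerate] by blast
qed

end


subsection \<open>Bivariate forms\<close>

lemma poly_sum_bound: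
  fixes p :: "'a::comm_semiring_1 poly"
  assumes "degree p \<le> N"
  shows "poly p x = (\<Sum>i\<le>N. coeff p i * x ^ i)"
  unfolding poly_altdef using assms by (intro sum.mono_neutral_left) (auto simp: coeff_eq_0)

text \<open>A homogeneous form of degree \<open>d\<close> has a single monomial \<open>s\<^sup>i v\<^sup>d\<^sup>-\<^sup>i\<close> in each \<open>s\<close>-degree \<open>i\<close>.\<close>
lemma homog_inner:
  assumes h: "homogeneous d f"
  shows "poly (coeff f i) z = (if i \<le> d then coeff (coeff f i) (d - i) * z ^ (d - i) else 0)"
proof -
  have "poly (coeff f i) z = (\<Sum>j\<le>degree (coeff f i). coeff (coeff f i) j * z ^ j)" by (rule poly_altdef)
  also have "\<dots> = (\<Sum>j\<le>degree (coeff f i).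
      if j = d - i \<and> i \<le> d then coeff (coeff f i) (d - i) * z ^ (d - i) else 0)"
  proof (rule sum.cong[OF refl])
    fix j
    show "coeff (coeff f i) j * z ^ j = (if j = d - i \<and> i \<le> d then coeff (coeff f i) (d - i) * z ^ (d - i) else 0)"
    proof (cases "coeff (coeff f i) j = 0")
      case False
      then have "i + j = d" using h unfolding homogeneous_def by blast
      then show ?thesis by auto
    qed auto
  qed
  also have "\<dots> = (if i \<le> d then coeff (coeff f i) (d - i) * z ^ (d - i) else 0)"
    by (cases "i \<le> d \<and> d - i \<le> degree (coeff f i)") (auto simp: coeff_eq_0)
  finally show ?thesis .
qed

lemma dehom_coeff: "coeff (dehom f) i = poly (coeff f i) 1"
  unfolding dehom_def by (simp add: coeff_map_poly)

lemma poly_dehom: "poly (dehom f) t0 = poly (poly f [:t0:]) 1"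
proof -
  have "poly (dehom f) t0 = (\<Sum>i\<le>degree f. coeff (dehom f) i * t0 ^ i)"
    by (rule poly_sum_bound) (simp add: dehom_def map_poly_degree_leq)
  also have "\<dots> = (\<Sum>i\<le>degree f. poly (coeff f i * [:t0:] ^ i) 1)"
    by (simp add: dehom_coeff poly_power)
  also have "\<dots> = poly (poly f [:t0:]) 1"
    by (simp add: poly_altdef[of f "[:t0:]"] poly_sum)
  finally show ?thesis .
qed

lemma dehom_homog_sum:
  assumes h: "homogeneous d f"
  shows "poly (dehom f) t0 = (\<Sum>j\<le>d. coeff (coeff f j) (d - j) * t0 ^ j)"
proof -
  have "degree (dehom f) \<le> d"
    by (rule degree_le) (auto simp: dehom_coeff homog_inner[OF h])
  then have "poly (dehom f) t0 = (\<Sum>j\<le>d. coeff (dehom f) j * t0 ^ j)" by (rule poly_sum_bound)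
  also have "\<dots> = (\<Sum>j\<le>d. coeff (coeff f j) (d - j) * t0 ^ j)"
    by (rule sum.cong) (auto simp: dehom_coeff homog_inner[OF h])
  finally show ?thesis .
qed

lemma poly_line:
  assumes h: "homogeneous d f"
  shows "poly (poly f [:0,t0:]) z = z ^ d * poly (dehom f) t0"
proof -
  have "poly (poly f [:0,t0:]) z = (\<Sum>i\<le>degree f. poly (coeff f i) z * (t0 * z) ^ i)"
    by (simp add: poly_altdef[of f "[:0,t0:]"] poly_sum poly_power ac_simps)
  also have "\<dots> = (\<Sum>i\<le>degree f. z ^ d * (poly (coeff f i) 1 * t0 ^ i))"
  proof (rule sum.cong[OF refl])
    fix i
    show "poly (coeff f i) z * (t0 * z) ^ i = z ^ d * (poly (coeff f i) 1 * t0 ^ i)"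
    proof (cases "i \<le> d")
      case True
      then have "z ^ (d - i) * z ^ i = z ^ d" by (simp add: power_add[symmetric])
      then show ?thesis using True by (simp add: homog_inner[OF h] power_mult_distrib ac_simps)
    qed (simp add: homog_inner[OF h])
  qed
  also have "\<dots> = z ^ d * (\<Sum>i\<le>degree f. coeff (dehom f) i * t0 ^ i)"
    by (simp add: sum_distrib_left dehom_coeff)
  also have "(\<Sum>i\<le>degree f. coeff (dehom f) i * t0 ^ i) = poly (dehom f) t0"
    by (rule poly_sum_bound[symmetric]) (simp add: dehom_def map_poly_degree_leq)
  finally show ?thesis .
qed

lemma line_dvd:
  assumes h: "homogeneous d f" and z: "poly (dehom f) t0 = 0"
  shows "[:- [:0,t0:], 1:] dvd f"
proof -
  have "poly f [:0,t0:] = 0"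
    using poly_line[OF h, of t0] z by (auto simp: poly_all_0_iff_0[symmetric])
  then show ?thesis using poly_eq_0_iff_dvd by blast
qed

lemma homogeneous_not_unit:
  assumes h: "homogeneous n f" and n: "n \<ge> 1"
  shows "\<not> is_unit f"
proof
  assume "is_unit f"
  then obtain g where fg: "1 = f * g" by (auto elim!: dvdE)
  then have f0: "f \<noteq> 0" and g0: "g \<noteq> 0" by auto
  have c0: "coeff f 0 * coeff g 0 = 1" using arg_cong[OF fg, of "\<lambda>x. coeff x 0"] by (simp add: coeff_mult_0)
  then have f00: "coeff f 0 \<noteq> 0" and g00: "coeff g 0 \<noteq> 0" by auto
  have "degree (coeff f 0) + degree (coeff g 0) = 0"
    using degree_mult_eq[OF f00 g00] c0 by simp
  then have "coeff (coeff f 0) 0 \<noteq> 0" using f00 by (metis add_is_0 leading_coeff_0_iff)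
  then have "0 + 0 = n" using h unfolding homogeneous_def by blast
  then show False using n by simp
qed

text \<open>Coprime forms \<open>a, b, c\<close> of positive degree: no linear form divides all three, and no
  nonzero constant vector \<open>w\<close> satisfies the Koszul relations \<open>w\<^sub>a b = w\<^sub>b a\<close> etc. (otherwise one
  of \<open>a, b, c\<close> would divide the others).\<close>
lemma coprime_forms_no_common_root:
  assumes ha: "homogeneous n a" and hb: "homogeneous n b" and hc: "homogeneous n c"
    and g: "gcd a (gcd b c) = 1"
  shows "\<not> (poly (dehom a) t0 = 0 \<and> poly (dehom b) t0 = 0 \<and> poly (dehom c) t0 = 0)"
proof
  let ?L = "[:- [:0,t0:], 1:] :: form"
  assume "poly (dehom a) t0 = 0 \<and> poly (dehom b) t0 = 0 \<and> poly (dehom c) t0 = 0"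
  then have "?L dvd gcd a (gcd b c)"
    using line_dvd[OF ha] line_dvd[OF hb] line_dvd[OF hc] by simp
  then have "is_unit ?L" using g by simp
  then show False by (simp add: is_unit_poly_iff)
qed

lemma coprime_forms_no_koszul_vector:
  fixes wa wb wc :: complex
  defines "W \<equiv> \<lambda>w. [:[:w:]:] :: form"
  assumes ha: "homogeneous n a" and hb: "homogeneous n b" and hc: "homogeneous n c"
    and n: "n \<ge> 1" and g: "gcd a (gcd b c) = 1"
    and k1: "b * W wa = a * W wb" and k2: "c * W wa = a * W wc" and k3: "c * W wb = b * W wc"
  shows "wa = 0 \<and> wb = 0 \<and> wc = 0"
proof -
  have dv: "y dvd x" if "x * W w = y * W w'" "w \<noteq> 0" for x y w w'
  proof -
    have inv: "W w * W (1/w) = 1" using that(2) by (simp add: W_def one_pCons)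
    have "x = x * (W w * W (1/w))" unfolding inv by simp
    also have "\<dots> = y * (W w' * W (1/w))" using that(1) by (metis mult.assoc)
    finally show ?thesis by (rule dvdI)
  qed
  have not_dvd: "\<not> f dvd gcd a (gcd b c)" if "homogeneous n f" for f
    using homogeneous_not_unit[OF that n] g by simp
  show ?thesis
  proof (intro conjI; rule ccontr)
    assume "wa \<noteq> 0"
    then show False using not_dvd[OF ha] dv[OF k1] dv[OF k2] by simp
  next
    assume "wb \<noteq> 0"
    then show False using not_dvd[OF hb] dv[OF k1[symmetric]] dv[OF k3] by simp
  next
    assume "wc \<noteq> 0"
    then show False using not_dvd[OF hc] dv[OF k2[symmetric]] dv[OF k3[symmetric]] by simp
  qed
qed

lemma poly_phi_coeff:
  "poly (phi_coeff d a b c (h1,h2,h3) i) t0 = (if i \<le> d then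
     coeff (coeff h1 i) (d-i) * poly (dehom a) t0 + coeff (coeff h2 i) (d-i) * poly (dehom b) t0
   + coeff (coeff h3 i) (d-i) * poly (dehom c) t0 else 0)"
  unfolding phi_coeff_def by simp

lemma phi_coeff_vanish: "i > d \<Longrightarrow> phi_coeff d a b c h i = 0"
  unfolding phi_coeff_def by simp

lemma phi_coeff_on_line:
  assumes h1: "homogeneous d h1" and h2: "homogeneous d h2" and h3: "homogeneous d h3"
    and syz: "is_syzygy a b c (h1,h2,h3)"
  shows "(\<Sum>j\<le>d. phi_coeff d a b c (h1,h2,h3) j * [:0,1:] ^ j) = 0"
proof -
  have "poly (\<Sum>j\<le>d. phi_coeff d a b c (h1,h2,h3) j * [:0,1:] ^ j) t0 = 0" for t0
  proof -
    let ?wa = "poly (dehom a) t0" and ?wb = "poly (dehom b) t0" and ?wc = "poly (dehom c) t0"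
    have "poly (\<Sum>j\<le>d. phi_coeff d a b c (h1,h2,h3) j * [:0,1:] ^ j) t0
      = (\<Sum>j\<le>d. (coeff (coeff h1 j) (d-j) * ?wa + coeff (coeff h2 j) (d-j) * ?wb
          + coeff (coeff h3 j) (d-j) * ?wc) * t0 ^ j)"
      by (simp add: poly_sum poly_phi_coeff)
    also have "\<dots> = poly (dehom h1) t0 * ?wa + poly (dehom h2) t0 * ?wb + poly (dehom h3) t0 * ?wc"
      unfolding dehom_homog_sum[OF h1] dehom_homog_sum[OF h2] dehom_homog_sum[OF h3]
      by (simp add: sum_distrib_left sum.distrib algebra_simps)
    also have "\<dots> = poly (poly (h1 * a + h2 * b + h3 * c) [:t0:]) 1"
      by (simp add: poly_dehom)
    also have "\<dots> = 0" using syz by (simp add: is_syzygy_def)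
    finally show ?thesis .
  qed
  then show ?thesis using poly_all_0_iff_0 by blast
qed

lemma annihilates_point_if_phi_coeffs_vanish:
  assumes h1: "homogeneous d h1" and h2: "homogeneous d h2" and h3: "homogeneous d h3"
    and z: "\<forall>i. poly (phi_coeff d a b c (h1,h2,h3) i) t0 = 0"
  shows "h1 * [:[:poly (dehom a) t0:]:] + h2 * [:[:poly (dehom b) t0:]:] + h3 * [:[:poly (dehom c) t0:]:] = 0"
    (is "?hw = 0")
proof (rule poly_eqI, rule poly_eqI)
  have const_coeff: "coeff (coeff (p * [:[:w:]:]) i) j = coeff (coeff p i) j * w" for p :: form and w i j
    by (simp add: mult.commute[of p] mult.commute)
  fix i j
  show "coeff (coeff ?hw i) j = coeff (coeff 0 i) j"
  proof (cases "i + j = d")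
    case True
    then have "i \<le> d" "j = d - i" by auto
    then show ?thesis using z[rule_format, of i] by (simp add: poly_phi_coeff const_coeff ac_simps)
  next
    case False
    then have "coeff (coeff h1 i) j = 0" "coeff (coeff h2 i) j = 0" "coeff (coeff h3 i) j = 0"
      using h1 h2 h3 unfolding homogeneous_def by auto
    then show ?thesis by (simp add: const_coeff)
  qed
qed

text \<open>For a \<open>\<mu>\<close>-basis of coprime forms, the coefficients of \<open>p\<^sub>\<phi>(s,v;t,1)\<close> and \<open>q\<^sub>\<phi>(s,v;t,1)\<close>
  have no common root \<open>t\<^sub>0\<close>: otherwise \<open>p\<close>, \<open>q\<close>, hence every syzygy, in particular the Koszul
  syzygies of \<open>(a,b,c)\<close>, would annihilate \<open>w\<close>, forcing \<open>w = 0\<close>, i.e. a common root of \<open>a,b,c\<close>.\<close>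
lemma mu_basis_no_common_root:
  assumes ha: "homogeneous n a" and hb: "homogeneous n b" and hc: "homogeneous n c"
    and n: "n \<ge> 1" and g: "gcd a (gcd b c) = 1" and mu: "mu_basis n \<mu> a b c p q"
  shows "\<exists>i. poly (phi_coeff \<mu> a b c p i) t0 \<noteq> 0 \<or> poly (phi_coeff (n-\<mu>) a b c q i) t0 \<noteq> 0"
proof (rule ccontr)
  assume "\<not> ?thesis"
  then have zp: "\<forall>i. poly (phi_coeff \<mu> a b c p i) t0 = 0"
    and zq: "\<forall>i. poly (phi_coeff (n-\<mu>) a b c q i) t0 = 0" by auto
  obtain p1 p2 p3 where p: "p = (p1,p2,p3)" by (cases p)
  obtain q1 q2 q3 where q: "q = (q1,q2,q3)" by (cases q)
  \<comment> \<open>kept opaque so that the simplifier does not expand products with constants\<close>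
  define W where "W = (\<lambda>w. [:[:w:]:] :: form)"
  let ?wa = "poly (dehom a) t0" and ?wb = "poly (dehom b) t0" and ?wc = "poly (dehom c) t0"
  let ?ann = "\<lambda>h1 h2 h3. h1 * W ?wa + h2 * W ?wb + h3 * W ?wc = 0"
  have hp: "homogeneous \<mu> p1" "homogeneous \<mu> p2" "homogeneous \<mu> p3"
    and hq: "homogeneous (n-\<mu>) q1" "homogeneous (n-\<mu>) q2" "homogeneous (n-\<mu>) q3"
    using mu unfolding mu_basis_def p q by auto
  have basis: "\<exists>\<alpha> \<beta>. h = (\<alpha>*p1+\<beta>*q1, \<alpha>*p2+\<beta>*q2, \<alpha>*p3+\<beta>*q3)"
    if "is_syzygy a b c h" for h
  proof -
    have "\<exists>!(\<alpha>,\<beta>). h = (\<alpha>*p1+\<beta>*q1, \<alpha>*p2+\<beta>*q2, \<alpha>*p3+\<beta>*q3)"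
      using mu that unfolding mu_basis_def p q by (simp only: prod.case)
    then obtain x where "case x of (\<alpha>,\<beta>) \<Rightarrow> h = (\<alpha>*p1+\<beta>*q1, \<alpha>*p2+\<beta>*q2, \<alpha>*p3+\<beta>*q3)"
      by (rule ex1E) blast
    then show ?thesis by (cases x) auto
  qed
  have "?ann p1 p2 p3" using annihilates_point_if_phi_coeffs_vanish[OF hp] zp p unfolding W_def by simp
  moreover have "?ann q1 q2 q3" using annihilates_point_if_phi_coeffs_vanish[OF hq] zq q unfolding W_def by simp
  ultimately have syz_ann: "?ann h1 h2 h3" if syz: "is_syzygy a b c (h1,h2,h3)" for h1 h2 h3
  proof -
    obtain \<alpha> \<beta> where e: "(h1,h2,h3) = (\<alpha>*p1+\<beta>*q1, \<alpha>*p2+\<beta>*q2, \<alpha>*p3+\<beta>*q3)"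
      using basis[OF syz] by blast
    have "h1 * W ?wa + h2 * W ?wb + h3 * W ?wc
        = \<alpha> * (p1 * W ?wa + p2 * W ?wb + p3 * W ?wc) + \<beta> * (q1 * W ?wa + q2 * W ?wb + q3 * W ?wc)"
      using e by (simp add: algebra_simps)
    then show ?thesis using \<open>?ann p1 p2 p3\<close> \<open>?ann q1 q2 q3\<close> by simp
  qed
  have "b * W ?wa = a * W ?wb" using syz_ann[of b "-a" 0] by (simp add: is_syzygy_def algebra_simps)
  moreover have "c * W ?wa = a * W ?wc" using syz_ann[of c 0 "-a"] by (simp add: is_syzygy_def algebra_simps)
  moreover have "c * W ?wb = b * W ?wc" using syz_ann[of 0 c "-b"] by (simp add: is_syzygy_def algebra_simps)
  ultimately have "?wa = 0 \<and> ?wb = 0 \<and> ?wc = 0"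
    using coprime_forms_no_koszul_vector[OF ha hb hc n g] unfolding W_def by blast
  then show False using coprime_forms_no_common_root[OF ha hb hc g] by blast
qed

lemma mu_basis_line_vanishing_pair:
  assumes n: "n \<ge> 3" and ha: "homogeneous n a" and hb: "homogeneous n b" and hc: "homogeneous n c"
    and g: "gcd a (gcd b c) = 1" and mu: "mu_basis n \<mu> a b c p q"
  shows "line_vanishing_pair (phi_coeff \<mu> a b c p) (phi_coeff (n-\<mu>) a b c q) \<mu> (n-\<mu>)"
proof
  obtain p1 p2 p3 where p: "p = (p1,p2,p3)" by (cases p)
  obtain q1 q2 q3 where q: "q = (q1,q2,q3)" by (cases q)
  have hp: "homogeneous \<mu> p1" "homogeneous \<mu> p2" "homogeneous \<mu> p3"
    and hq: "homogeneous (n-\<mu>) q1" "homogeneous (n-\<mu>) q2" "homogeneous (n-\<mu>) q3"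
    and sp: "is_syzygy a b c (p1,p2,p3)" and sq: "is_syzygy a b c (q1,q2,q3)"
    and mle: "\<mu> \<le> n - \<mu>"
    using mu unfolding mu_basis_def p q by auto
  show "\<forall>x>\<mu>. phi_coeff \<mu> a b c p x = 0" "\<forall>x>n-\<mu>. phi_coeff (n-\<mu>) a b c q x = 0"
    by (auto simp: phi_coeff_vanish)
  show "(\<Sum>j\<le>\<mu>. phi_coeff \<mu> a b c p j * [:0,1:] ^ j) = 0"
    unfolding p by (rule phi_coeff_on_line[OF hp sp])
  show "(\<Sum>j\<le>n-\<mu>. phi_coeff (n-\<mu>) a b c q j * [:0,1:] ^ j) = 0"
    unfolding q by (rule phi_coeff_on_line[OF hq sq])
  show "\<exists>i. poly (phi_coeff \<mu> a b c p i) t0 \<noteq> 0 \<or> poly (phi_coeff (n-\<mu>) a b c q i) t0 \<noteq> 0" for t0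
    by (rule mu_basis_no_common_root[OF ha hb hc _ g mu]) (use n in simp)
  show "3 \<le> \<mu> + (n - \<mu>)" using n mle by simp
qed

subsection \<open>The Fitting ideals of \<open>S\<^sub>p\<^sub>\<phi>\<^sub>,\<^sub>q\<^sub>\<phi>(t,1)\<close>\<close>

theorem proposition3p4:
  fixes n \<mu> :: nat and a b c :: form and p q :: "form \<times> form \<times> form"
  assumes "n \<ge> 3"
    and "homogeneous n a" and "homogeneous n b" and "homogeneous n c"
    and "gcd a (gcd b c) = 1"
    and "birational_onto_image a b c"
    and "mu_basis n \<mu> a b c p q"
  shows "fitting_ideal (sylvester_phi n \<mu> a b c p q) 0 = {0} \<and>
         fitting_ideal (sylvester_phi n \<mu> a b c p q) 1 = ideal_gen {Delta1 n \<mu> a b c p q} \<and>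
         (\<forall>l. l > n - \<mu> \<longrightarrow> fitting_ideal (sylvester_phi n \<mu> a b c p q) l = UNIV)"
proof -
  interpret line_vanishing_pair "phi_coeff \<mu> a b c p" "phi_coeff (n-\<mu>) a b c q" \<mu> "n-\<mu>"
    using assms(1-5,7) by (rule mu_basis_line_vanishing_pair)
  have mle: "\<mu> \<le> n - \<mu>" using assms(7) unfolding mu_basis_def by simp
  then have n_eq: "\<mu> + (n - \<mu>) = n" by simp
  have S: "sylvester_phi n \<mu> a b c p q = sylvester" unfolding sylvester_phi_def n_eq ..
  have D: "Delta1 n \<mu> a b c p q = subres" unfolding Delta1_def n_eq ..
  have "fitting_ideal sylvester l = UNIV" if "l > n - \<mu>" for l
    by (rule fitting_ideal_large) (use that mle n_eq in auto)
  then show ?thesis using fitting_ideal_zero fitting_ideal_one unfolding S D by blast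
qed

end
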